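(* Let $(\mathbf k((G_1)),l_1)$ and $(\mathbf k((G_2)),l_2)$ be series fields with prelogarithmic sections, and let $\psi$ be a morphism from $(\mathbf k((G_1)),l_1)$ to $(\mathbf k((G_2)),l_2)$. Then: (1) $\psi^{EL}:\mathbf k((G_1))^{EL}\to\mathbf k((G_2))^{EL}$ is a $\mathbf k$-embedding of ordered fields which respects arbitrary sums. (2) $\psi^{EL}(\mathrm{Log}(a))=\mathrm{Log}(\psi^{EL}(a))$ for every $a\in\mathbf k((G_1))^{EL}$ with $a>0$, and $\psi^{EL}(\mathrm{Exp}(a))=\mathrm{Exp}(\psi^{EL}(a))$ for every $a\in\mathbf k((G_1))^{EL}$. (3) If $G_2\subseteq\psi^{EL}(G_1^{\#n})$ for some $n\in\mathbb N$, then $\mathbf k((G_2^{\#m}))\subseteq\psi^{EL}\big(\mathbf k((G_1^{\#(n+m)}))\big)$ for all $m\in\mathbb N$; hence in this case $\psi^{EL}$ is surjective and $(\psi^{EL})^{-1}$ respects arbitrary sums.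
   Context: Let $\mathbf k$ be an ordered field and $(G,\cdot,<)$ a totally ordered abelian group (written multiplicatively). $\mathbf k((G))$ denotes the field of generalized power series $\alpha=\sum_{g\in G}\alpha(g)\,g$ ($\alpha(g)\in\mathbf k$) whose support $\operatorname{supp}\alpha=\{g:\alpha(g)\ne0\}$ is anti-well-ordered (every nonempty subset has a largest element), with the usual addition and convolution multiplication. It carries the canonical valuation $v(\alpha)=\max\operatorname{supp}\alpha$ for $\alpha\ne0$ and the ordering $\alpha>0$ iff $\alpha(v(\alpha))>0$. $\mathbf k$ and $G$ are identified with subsets of $\mathbf k((G))$. For $S\subseteq G$, $\mathbf k((S))=\{\alpha:\operatorname{supp}\alpha\subseteq S\}$; $G^{>1}=\{g\in G:g>1\}$, $G^{<1}$ similarly. Every $\alpha>0$ is uniquely $\alpha=g\,a\,(1+\varepsilon)$ with $g=v(\alpha)$, $a\in\mathbf k^{>0}$, $\varepsilon\in\mathbf k((G^{<1}))$. A prelogarithmic section of $\mathbf k((G))$ is an order-preserving group embedding $l:(G,\cdot)\to(\mathbf k((G^{>1})),+)$. Fix an order-preserving group isomorphism $\log:(\mathbf k^{>0},\cdot)\to(\mathbf k,+)$. The prelogarithm of $l$ is $L(g\,a(1+\varepsilon))=l(g)+\log a+\sum_{i\ge1}(-1)^{i-1}\varepsilon^i/i$. Exponential extension: $G^\#$ is the ordered abelian group of formal symbols $e(\alpha)$, $\alpha\in\mathbf k((G^{>1}))$, with $e(\alpha)e(\beta)=e(\alpha+\beta)$ and $e(\alpha)<e(\beta)\iff\alpha<\beta$,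 where $e(l(g))$ is identified with $g\in G$ (so $G\le G^\#$ and $\mathbf k((G))\subseteq\mathbf k((G^\#))$); $l^\#(e(\alpha))=\alpha$ is a prelogarithmic section of $\mathbf k((G^\#))$ extending $l$, with image $\mathbf k((G^{>1}))$. Iterating: $G^{\#0}=G$, $G^{\#(n+1)}=(G^{\#n})^\#$ with sections $l^{\#n}$ and prelogarithms $L^{\#n}$. The EL-series field is $\mathbf k((G))^{EL}=\bigcup_n\mathbf k((G^{\#n}))$ with $\mathrm{Log}=\bigcup_nL^{\#n}$, an order preserving isomorphism $(\mathbf k((G))^{EL,>0},\cdot)\to(\mathbf k((G))^{EL},+)$; $\mathrm{Exp}=\mathrm{Log}^{-1}$; $G^{EL}=\bigcup_nG^{\#n}$. Morphisms: a map $\nu:\mathbf k((G_1))\to\mathbf k((G_2))$ respects arbitrary sums if $\nu(\sum a_gg)=\sum a_g\nu(g)$. An order-preserving group embedding $\psi:G_1\to G_2$ is extended to $\mathbf k((G_1))$ by $\psi(\sum a_gg)=\sum a_g\psi(g)$; it is a morphism $(\mathbf k((G_1)),l_1)\to(\mathbf k((G_2)),l_2)$ if $\psi\circ l_1=l_2\circ\psi$ on $G_1$. It induces the morphism $\psi^\#=(l_2^\#)^{-1}\circ\psi\circ l_1^\#:G_1^\#\to G_2^\#$ extending $\psi$; iterating gives $\psi^{\#n}$, and $\psi^{EL}=\bigcup_n\psi^{\#n}:\mathbf k((G_1))^{EL}\to\mathbf k((G_2))^{EL}$. *)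

theory Defs
  imports Main
begin

text \<open>The value groups are written ADDITIVELY inside a type of class
  linordered_ab_group_add: the paper's product g*h of monomials is g + h, the
  neutral monomial 1 is 0, and G^{>1} is {g. 0 < g}. A generalized power series
  is a function from the group type to the coefficient field k with anti-well-ordered
  support contained in a given subset (subgroup) of the ambient group type.\<close>

definition hsupp :: "('u \<Rightarrow> 'k::zero) \<Rightarrow> 'u set" where
  "hsupp a = {g. a g \<noteq> 0}"

definition anti_wo :: "'u::linorder set \<Rightarrow> bool" where
  "anti_wo S \<longleftrightarrow> (\<forall>T. T \<subseteq> S \<longrightarrow> T \<noteq> {} \<longrightarrow> (\<exists>m\<in>T. \<forall>t\<in>T. t \<le> m))"

definition hahn :: "'u::linorder set \<Rightarrow> ('u \<Rightarrow> 'k::zero) set" where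
  "hahn S = {a. hsupp a \<subseteq> S \<and> anti_wo (hsupp a)}"

definition hzero :: "'u \<Rightarrow> 'k::zero" where
  "hzero = (\<lambda>_. 0)"

definition hadd :: "('u \<Rightarrow> 'k::plus) \<Rightarrow> ('u \<Rightarrow> 'k) \<Rightarrow> 'u \<Rightarrow> 'k" where
  "hadd a b = (\<lambda>g. a g + b g)"

definition hsub :: "('u \<Rightarrow> 'k::minus) \<Rightarrow> ('u \<Rightarrow> 'k) \<Rightarrow> 'u \<Rightarrow> 'k" where
  "hsub a b = (\<lambda>g. a g - b g)"

definition hscale :: "'k::times \<Rightarrow> ('u \<Rightarrow> 'k) \<Rightarrow> 'u \<Rightarrow> 'k" where
  "hscale c a = (\<lambda>g. c * a g)"

definition hconst :: "'k::zero \<Rightarrow> 'u::zero \<Rightarrow> 'k" where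
  "hconst c = (\<lambda>g. if g = 0 then c else 0)"

definition monom :: "'u \<Rightarrow> 'u \<Rightarrow> 'k::zero_neq_one" where
  "monom m = (\<lambda>g. if g = m then 1 else 0)"

text \<open>Convolution product (the index set is finite for series with anti-well-ordered support).\<close>
definition hmul :: "('u::ab_group_add \<Rightarrow> 'k::comm_ring) \<Rightarrow> ('u \<Rightarrow> 'k) \<Rightarrow> 'u \<Rightarrow> 'k" where
  "hmul a b = (\<lambda>g. \<Sum>x\<in>{x. a x \<noteq> 0 \<and> b (g - x) \<noteq> 0}. a x * b (g - x))"

definition hpow :: "('u::ab_group_add \<Rightarrow> 'k::comm_ring_1) \<Rightarrow> nat \<Rightarrow> 'u \<Rightarrow> 'k" where
  "hpow a n = ((hmul a) ^^ n) (hconst 1)"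

definition hval :: "('u::linorder \<Rightarrow> 'k::zero) \<Rightarrow> 'u" where
  "hval a = (THE m. m \<in> hsupp a \<and> (\<forall>t\<in>hsupp a. t \<le> m))"

definition hpos :: "('u::linorder \<Rightarrow> 'k::{zero,ord}) \<Rightarrow> bool" where
  "hpos a \<longleftrightarrow> a \<noteq> hzero \<and> 0 < a (hval a)"

definition hless :: "('u::linorder \<Rightarrow> 'k::{ab_group_add,ord}) \<Rightarrow> ('u \<Rightarrow> 'k) \<Rightarrow> bool" where
  "hless a b \<longleftrightarrow> hpos (hsub b a)"

definition hsummable :: "('i \<Rightarrow> 'u::linorder \<Rightarrow> 'k::zero) \<Rightarrow> 'i set \<Rightarrow> bool" where
  "hsummable F I \<longleftrightarrow> anti_wo (\<Union>i\<in>I. hsupp (F i)) \<and> (\<forall>g. finite {i\<in>I. F i g \<noteq> 0})"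

definition hsum :: "('i \<Rightarrow> 'u \<Rightarrow> 'k::comm_monoid_add) \<Rightarrow> 'i set \<Rightarrow> 'u \<Rightarrow> 'k" where
  "hsum F I = (\<lambda>g. \<Sum>i\<in>{i\<in>I. F i g \<noteq> 0}. F i g)"

definition respects_sums ::
  "('u::linorder \<Rightarrow> 'k::{comm_ring_1}) set \<Rightarrow> (('u \<Rightarrow> 'k) \<Rightarrow> ('v::linorder \<Rightarrow> 'k)) \<Rightarrow> bool" where
  "respects_sums A nu \<longleftrightarrow>
     (\<forall>a\<in>A. hsummable (\<lambda>g. hscale (a g) (nu (monom g))) (hsupp a) \<and>
             nu a = hsum (\<lambda>g. hscale (a g) (nu (monom g))) (hsupp a))"

definition sext :: "('u \<Rightarrow> 'v) \<Rightarrow> ('u \<Rightarrow> 'k::comm_monoid_add) \<Rightarrow> 'v \<Rightarrow> 'k" where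
  "sext f a = (\<lambda>h. \<Sum>g\<in>{g. a g \<noteq> 0 \<and> f g = h}. a g)"

definition subgroup_of :: "'u::ab_group_add set \<Rightarrow> bool" where
  "subgroup_of H \<longleftrightarrow> 0 \<in> H \<and> (\<forall>x\<in>H. \<forall>y\<in>H. x + y \<in> H) \<and> (\<forall>x\<in>H. - x \<in> H)"

definition prelog_section ::
  "'u::linordered_ab_group_add set \<Rightarrow> ('u \<Rightarrow> 'u \<Rightarrow> 'k::linordered_field) \<Rightarrow> bool" where
  "prelog_section G l \<longleftrightarrow> subgroup_of G \<and>
     (\<forall>x\<in>G. l x \<in> hahn {g\<in>G. 0 < g}) \<and>
     (\<forall>x\<in>G. \<forall>y\<in>G. l (x + y) = hadd (l x) (l y)) \<and>
     (\<forall>x\<in>G. \<forall>y\<in>G. x < y \<longrightarrow> hless (l x) (l y))"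

text \<open>A realisation of the tower G = G^{#0} <= G^{#1} <= ... inside one ambient
  ordered group type: H n is G^{#n}, and lam restricted to H n is l^{#n}.
  H (Suc n) is an ordered group containing H n together with an order preserving
  group isomorphism onto (k((H n^{>1})),+) extending lam on H n; this characterises
  the exponential extension up to unique isomorphism over H n.\<close>
definition EL_tower ::
  "'u::linordered_ab_group_add set \<Rightarrow> ('u \<Rightarrow> 'u \<Rightarrow> 'k::linordered_field) \<Rightarrow>
   (nat \<Rightarrow> 'u set) \<Rightarrow> ('u \<Rightarrow> 'u \<Rightarrow> 'k) \<Rightarrow> bool" where
  "EL_tower G l H lam \<longleftrightarrow> H 0 = G \<and> (\<forall>g\<in>G. lam g = l g) \<and>
     (\<forall>n. H n \<subseteq> H (Suc n) \<and> subgroup_of (H (Suc n)) \<and>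
          bij_betw lam (H (Suc n)) (hahn {g\<in>H n. 0 < g}) \<and>
          (\<forall>x\<in>H (Suc n). \<forall>y\<in>H (Suc n). lam (x + y) = hadd (lam x) (lam y)) \<and>
          (\<forall>x\<in>H (Suc n). \<forall>y\<in>H (Suc n). x < y \<longrightarrow> hless (lam x) (lam y)))"

definition ELser :: "(nat \<Rightarrow> 'u::linorder set) \<Rightarrow> ('u \<Rightarrow> 'k::zero) set" where
  "ELser H = (\<Union>n. hahn (H n))"

text \<open>Log = union of the prelogarithms L^{#n}:
  L(g a (1+eps)) = l(g) + log a + sum_{i>=1} (-1)^(i-1) eps^i / i.\<close>
definition hLog ::
  "('k::linordered_field \<Rightarrow> 'k) \<Rightarrow> ('u::linordered_ab_group_add \<Rightarrow> 'u \<Rightarrow> 'k) \<Rightarrow>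
   ('u \<Rightarrow> 'k) \<Rightarrow> 'u \<Rightarrow> 'k" where
  "hLog log lam a =
     (let m = hval a; c = a m; eps = hsub (\<lambda>h. a (h + m) / c) (hconst 1) in
      hadd (hadd (lam m) (hconst (log c)))
           (hsum (\<lambda>i::nat. hscale ((-1) ^ (i - 1) / of_nat i) (hpow eps i)) {1..}))"

definition hExp ::
  "('k::linordered_field \<Rightarrow> 'k) \<Rightarrow> (nat \<Rightarrow> 'u::linordered_ab_group_add set) \<Rightarrow>
   ('u \<Rightarrow> 'u \<Rightarrow> 'k) \<Rightarrow> ('u \<Rightarrow> 'k) \<Rightarrow> 'u \<Rightarrow> 'k" where
  "hExp log H lam b = (THE a. a \<in> ELser H \<and> hpos a \<and> hLog log lam a = b)"

primrec psiN ::
  "('u \<Rightarrow> 'u \<Rightarrow> 'k::linordered_field) \<Rightarrow> (nat \<Rightarrow> 'v set) \<Rightarrow> ('v \<Rightarrow> 'v \<Rightarrow> 'k) \<Rightarrow>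
   ('u \<Rightarrow> 'v) \<Rightarrow> nat \<Rightarrow> 'u \<Rightarrow> 'v" where
  "psiN lam1 H2 lam2 psi 0 = psi"
| "psiN lam1 H2 lam2 psi (Suc n) =
     (\<lambda>g. inv_into (H2 (Suc n)) lam2 (sext (psiN lam1 H2 lam2 psi n) (lam1 g)))"

definition psiEL ::
  "(nat \<Rightarrow> 'u set) \<Rightarrow> ('u \<Rightarrow> 'u \<Rightarrow> 'k::linordered_field) \<Rightarrow> (nat \<Rightarrow> 'v set) \<Rightarrow>
   ('v \<Rightarrow> 'v \<Rightarrow> 'k) \<Rightarrow> ('u \<Rightarrow> 'v) \<Rightarrow> 'u \<Rightarrow> 'v" where
  "psiEL H1 lam1 H2 lam2 psi g = psiN lam1 H2 lam2 psi (LEAST n. g \<in> H1 n) g"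

definition PsiEL ::
  "(nat \<Rightarrow> 'u set) \<Rightarrow> ('u \<Rightarrow> 'u \<Rightarrow> 'k::linordered_field) \<Rightarrow> (nat \<Rightarrow> 'v set) \<Rightarrow>
   ('v \<Rightarrow> 'v \<Rightarrow> 'k) \<Rightarrow> ('u \<Rightarrow> 'v) \<Rightarrow> ('u \<Rightarrow> 'k) \<Rightarrow> 'v \<Rightarrow> 'k" where
  "PsiEL H1 lam1 H2 lam2 psi = sext (psiEL H1 lam1 H2 lam2 psi)"

end

theory Submission
  imports Defs Complex_Main "HOL-Library.Infinite_Set"
begin

(* The extension psi^{EL} is "transport of coefficients" (sext) along the map psi^{EL} on
   exponents, which is obtained level by level of the towers G1^{#n} and G2^{#n}: each psi^{#n}
   is an order-preserving group embedding H1 n -> H2 n, and psi^{#(n+1)} extends psi^{#n}.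

   Then it constructs psi^{EL}: part (1) follows from the transport lemmas, part (2) from the
   compatibility of transport with Log and from the bijectivity of Log, and for part (3) the
   inverse of psi^{EL} turns out to be transport along the inverse map rho of psi^{EL}. *)

section \<open>Anti-well-ordered sets\<close>

lemma anti_wo_max: "anti_wo S \<Longrightarrow> T \<subseteq> S \<Longrightarrow> T \<noteq> {} \<Longrightarrow> \<exists>m\<in>T. \<forall>t\<in>T. t \<le> m"
  unfolding anti_wo_def by blast

lemma anti_wo_subset: "anti_wo S \<Longrightarrow> T \<subseteq> S \<Longrightarrow> anti_wo T"
  unfolding anti_wo_def by (meson order_trans)

lemma anti_wo_Un:
  assumes A: "anti_wo A" and B: "anti_wo B"
  shows "anti_wo (A \<union> B)"
  unfolding anti_wo_def
proof (intro allI impI)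
  fix T assume T: "T \<subseteq> A \<union> B" "T \<noteq> {}"
  consider "T \<inter> A = {}" | "T \<inter> B = {}" | "T \<inter> A \<noteq> {}" "T \<inter> B \<noteq> {}" by blast
  then show "\<exists>m\<in>T. \<forall>t\<in>T. t \<le> m"
  proof cases
    case 1
    then show ?thesis using anti_wo_max[OF B _ T(2)] T(1) by blast
  next
    case 2
    then show ?thesis using anti_wo_max[OF A _ T(2)] T(1) by blast
  next
    case 3
    obtain ma where ma: "ma \<in> T \<inter> A" "\<forall>t\<in>T \<inter> A. t \<le> ma"
      using anti_wo_max[OF A _ 3(1)] by blast
    obtain mb where mb: "mb \<in> T \<inter> B" "\<forall>t\<in>T \<inter> B. t \<le> mb"
      using anti_wo_max[OF B _ 3(2)] by blast
    have "\<forall>t\<in>T. t \<le> max ma mb" using T(1) ma mb by (auto simp: le_max_iff_disj)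
    moreover have "max ma mb \<in> T" using ma mb by (simp add: max_def)
    ultimately show ?thesis by blast
  qed
qed

lemma anti_wo_insert: "anti_wo A \<Longrightarrow> anti_wo (insert x A)"
  using anti_wo_Un[of "{x}" A] unfolding anti_wo_def by auto

lemma anti_wo_image:
  assumes aw: "anti_wo A" and mono: "\<forall>x\<in>A. \<forall>y\<in>A. x < y \<longrightarrow> f x < f y"
  shows "anti_wo (f ` A)"
  unfolding anti_wo_def
proof (intro allI impI)
  fix T assume T: "T \<subseteq> f ` A" "T \<noteq> {}"
  obtain m where m: "m \<in> A" "f m \<in> T" "\<forall>x\<in>A. f x \<in> T \<longrightarrow> x \<le> m"
    using anti_wo_max[OF aw, of "{x\<in>A. f x \<in> T}"] T by blast
  have "t \<le> f m" if "t \<in> T" for t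
  proof -
    obtain x where x: "x \<in> A" "t = f x" using T(1) \<open>t \<in> T\<close> by blast
    then have "x \<le> m" using m(3) \<open>t \<in> T\<close> by blast
    then show ?thesis using mono x m(1) by (auto simp: order_le_less)
  qed
  then show "\<exists>m\<in>T. \<forall>t\<in>T. t \<le> m" using m(2) by blast
qed

lemma anti_wo_seq:
  fixes T :: "'a::linorder set"
  assumes no_incr: "\<And>f. (\<forall>i. f i \<in> T) \<Longrightarrow> \<exists>i. \<not> f i < f (Suc i)"
  shows "anti_wo T"
proof -
  let ?r = "{(x, y). x \<in> T \<and> y \<in> T \<and> y < x}"
  have "wf ?r"
    unfolding wf_iff_no_infinite_down_chain
  proof
    assume "\<exists>f. \<forall>i. (f (Suc i), f i) \<in> ?r"
    then obtain f where "\<forall>i. f i \<in> T" "\<forall>i. f i < f (Suc i)" by auto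
    then show False using no_incr by blast
  qed
  show ?thesis unfolding anti_wo_def
  proof (intro allI impI)
    fix U assume U: "U \<subseteq> T" "U \<noteq> {}"
    then obtain z where z: "z \<in> U" "\<forall>y. (y, z) \<in> ?r \<longrightarrow> y \<notin> U"
      using \<open>wf ?r\<close> unfolding wf_eq_minimal by blast
    have "t \<le> z" if "t \<in> U" for t
    proof (rule ccontr)
      assume "\<not> t \<le> z"
      then have "(t, z) \<in> ?r" using that z(1) U(1) by auto
      then show False using z(2) that by blast
    qed
    then show "\<exists>m\<in>U. \<forall>t\<in>U. t \<le> m" using z(1) by blast
  qed
qed

text \<open>Every sequence in an anti-well-ordered set has a non-increasing subsequence: a monotone
  subsequence that is non-decreasing must become constant once it reaches its maximum.\<close>

lemma anti_wo_nonincreasing_subseq: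
  fixes x :: "nat \<Rightarrow> 'a::linorder"
  assumes aw: "anti_wo S" and xS: "\<forall>n. x n \<in> S"
  obtains q :: "nat \<Rightarrow> nat" where "strict_mono q" "\<And>i j. i \<le> j \<Longrightarrow> x (q j) \<le> x (q i)"
proof -
  obtain r where r: "strict_mono r" "monoseq (\<lambda>n. x (r n))" using seq_monosub by blast
  show ?thesis
  proof (cases "\<forall>m. \<forall>n\<ge>m. x (r n) \<le> x (r m)")
    case True
    show ?thesis
    proof (rule that)
      show "strict_mono r" by (rule r(1))
      show "x (r j) \<le> x (r i)" if "i \<le> j" for i j using True that by blast
    qed
  next
    case False
    then have inc: "\<And>m n. m \<le> n \<Longrightarrow> x (r m) \<le> x (r n)" using r(2) unfolding monoseq_def by blast
    have "range (\<lambda>n. x (r n)) \<subseteq> S" using xS by blast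
    then obtain M where M: "M \<in> range (\<lambda>n. x (r n))" "\<forall>t\<in>range (\<lambda>n. x (r n)). t \<le> M"
      using anti_wo_max[OF aw] by blast
    then obtain K where K: "M = x (r K)" by blast
    have const: "x (r n) = M" if "K \<le> n" for n
    proof (rule order_antisym)
      show "x (r n) \<le> M" using M(2) by blast
      show "M \<le> x (r n)" using inc[OF that] K by simp
    qed
    show ?thesis
    proof (rule that)
      show "strict_mono (\<lambda>n. r (n + K))" using r(1) unfolding strict_mono_def by simp
      show "x (r (j + K)) \<le> x (r (i + K))" for i j using const by simp
    qed
  qed
qed

section \<open>Higman's lemma for an anti-well-ordered alphabet\<close>

inductive emb :: "'a::linorder list \<Rightarrow> 'a list \<Rightarrow> bool" where
  emb_Nil: "emb [] w"
| emb_skip: "emb u w \<Longrightarrow> emb u (x # w)"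
| emb_match: "emb u w \<Longrightarrow> y \<le> x \<Longrightarrow> emb (x # u) (y # w)"

definition bad :: "'a::linorder set \<Rightarrow> (nat \<Rightarrow> 'a list) \<Rightarrow> bool" where
  "bad S s \<longleftrightarrow> (\<forall>k. set (s k) \<subseteq> S) \<and> (\<forall>i j. i < j \<longrightarrow> \<not> emb (s i) (s j))"

text \<open>Nash-Williams' minimal bad sequence: the words that can follow the prefix p in some
  bad sequence, and the prefixes obtained by always choosing a shortest such word.\<close>

definition continuations :: "'a::linorder set \<Rightarrow> 'a list list \<Rightarrow> 'a list set" where
  "continuations S p = {w. \<exists>s. bad S s \<and> (\<forall>i<length p. s i = p ! i) \<and> s (length p) = w}"

definition shortest_continuation :: "'a::linorder set \<Rightarrow> 'a list list \<Rightarrow> 'a list" where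
  "shortest_continuation S p =
     (SOME w. w \<in> continuations S p \<and> (\<forall>w'\<in>continuations S p. length w \<le> length w'))"

primrec mbs_prefix :: "'a::linorder set \<Rightarrow> nat \<Rightarrow> 'a list list" where
  "mbs_prefix S 0 = []"
| "mbs_prefix S (Suc n) = mbs_prefix S n @ [shortest_continuation S (mbs_prefix S n)]"

lemma length_mbs_prefix [simp]: "length (mbs_prefix S n) = n"
  by (induct n) auto

lemma nth_mbs_prefix: "i < n \<Longrightarrow> mbs_prefix S n ! i = shortest_continuation S (mbs_prefix S i)"
proof (induct n)
  case (Suc n)
  then show ?case by (cases "i = n") (auto simp: nth_append)
qed simp

lemma shortest_continuation:
  assumes "continuations S p \<noteq> {}"
  shows "shortest_continuation S p \<in> continuations S p"
    "\<And>w. w \<in> continuations S p \<Longrightarrow> length (shortest_continuation S p) \<le> length w"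
proof -
  obtain w0 where "w0 \<in> continuations S p" using assms by blast
  then have "\<exists>w. w \<in> continuations S p \<and> (\<forall>w'\<in>continuations S p. length w \<le> length w')"
    using ex_has_least_nat[of "\<lambda>w. w \<in> continuations S p" w0 length] by blast
  then have "shortest_continuation S p \<in> continuations S p \<and>
      (\<forall>w'\<in>continuations S p. length (shortest_continuation S p) \<le> length w')"
    unfolding shortest_continuation_def by (rule someI_ex)
  then show "shortest_continuation S p \<in> continuations S p"
    "\<And>w. w \<in> continuations S p \<Longrightarrow> length (shortest_continuation S p) \<le> length w" by auto
qed

lemma continuations_mbs_prefix:
  assumes "bad S s0"
  shows "continuations S (mbs_prefix S n) \<noteq> {}"
proof (induct n)
  case 0
  have "s0 0 \<in> continuations S (mbs_prefix S 0)" using assms unfolding continuations_def by auto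
  then show ?case by blast
next
  case (Suc n)
  obtain s where s: "bad S s" "\<forall>i<n. s i = mbs_prefix S n ! i"
      "s n = shortest_continuation S (mbs_prefix S n)"
    using shortest_continuation(1)[OF Suc] unfolding continuations_def by auto
  have "\<forall>i<Suc n. s i = mbs_prefix S (Suc n) ! i"
    using s by (auto simp: nth_append less_Suc_eq)
  then have "s (Suc n) \<in> continuations S (mbs_prefix S (Suc n))"
    using s(1) unfolding continuations_def by auto
  then show ?case by blast
qed

lemma minimal_bad_seq:
  assumes "bad S s0"
  obtains m where "bad S m"
    and "\<And>t k. bad S t \<Longrightarrow> \<forall>i<k. t i = m i \<Longrightarrow> length (m k) \<le> length (t k)"
proof -
  define m where "m k = shortest_continuation S (mbs_prefix S k)" for k
  have prefix: "mbs_prefix S n ! i = m i" if "i < n" for i n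
    unfolding m_def using nth_mbs_prefix[OF that] .
  have cont: "m k \<in> continuations S (mbs_prefix S k)" for k
    unfolding m_def by (rule shortest_continuation(1)[OF continuations_mbs_prefix[OF assms]])
  have "bad S m"
    unfolding bad_def
  proof (intro conjI allI impI)
    fix k
    obtain s where "bad S s" "s k = m k" using cont[of k] unfolding continuations_def by auto
    then show "set (m k) \<subseteq> S" unfolding bad_def by metis
  next
    fix i j :: nat assume ij: "i < j"
    obtain s where s: "bad S s" "\<forall>l<j. s l = m l" "s j = m j"
      using cont[of j] prefix unfolding continuations_def by auto
    then show "\<not> emb (m i) (m j)" using ij unfolding bad_def by metis
  qed
  moreover have "length (m k) \<le> length (t k)" if "bad S t" "\<forall>i<k. t i = m i" for t k
  proof -
    have "t k \<in> continuations S (mbs_prefix S k)" unfolding continuations_def using that prefix by auto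
    then show ?thesis unfolding m_def
      by (rule shortest_continuation(2)[OF continuations_mbs_prefix[OF assms]])
  qed
  ultimately show ?thesis using that by blast
qed

lemma bad_tails:
  assumes bad: "bad S m" and ne: "\<And>k. m k \<noteq> []"
    and q: "strict_mono q" and heads: "\<And>i j. i \<le> j \<Longrightarrow> hd (m (q j)) \<le> hd (m (q i))"
  shows "bad S (\<lambda>k. if k < q 0 then m k else tl (m (q (k - q 0))))" (is "bad S ?t")
  unfolding bad_def
proof (intro conjI allI impI)
  have mS: "set (m j) \<subseteq> S" for j using bad unfolding bad_def by blast
  then show "set (?t k) \<subseteq> S" for k using list.set_sel(2)[OF ne] by auto
next
  have split: "m k = hd (m k) # tl (m k)" for k using ne[of k] by simp
  have no_emb: "\<not> emb (m i) (m j)" if "i < j" for i j using bad that unfolding bad_def by blast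
  fix i j :: nat assume ij: "i < j"
  show "\<not> emb (?t i) (?t j)"
  proof
    assume e: "emb (?t i) (?t j)"
    show False
    proof (cases "j < q 0")
      case True
      then show False using e ij no_emb by auto
    next
      case jge: False
      let ?b = "q (j - q 0)"
      have "emb (?t i) (tl (m ?b))" using e jge by simp
      then have into_mb: "emb (?t i) (m ?b)" using emb_skip split[of ?b] by metis
      have "q 0 \<le> ?b" using q by (simp add: strict_mono_less_eq)
      show False
      proof (cases "i < q 0")
        case True
        then show False using into_mb no_emb[of i ?b] \<open>q 0 \<le> ?b\<close> by simp
      next
        case False
        let ?a = "q (i - q 0)"
        have lt: "i - q 0 < j - q 0" using False jge ij by simp
        have "emb (tl (m ?a)) (tl (m ?b))" using e False jge by simp
        then have "emb (hd (m ?a) # tl (m ?a)) (hd (m ?b) # tl (m ?b))"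
          using heads[of "i - q 0" "j - q 0"] lt by (simp add: emb_match)
        then have "emb (m ?a) (m ?b)" using split by metis
        moreover have "?a < ?b" using q lt by (simp add: strict_mono_less)
        ultimately show False using no_emb by blast
      qed
    qed
  qed
qed

text \<open>Otherwise take a minimal bad sequence m; its words are nonempty, and cutting
  off the heads along a subsequence with non-increasing heads gives a bad sequence whose word at
  position q 0 is shorter than m (q 0), contradicting minimality.\<close>

theorem higman:
  fixes S :: "'a::linorder set" and s :: "nat \<Rightarrow> 'a list"
  assumes aw: "anti_wo S" and sS: "\<forall>k. set (s k) \<subseteq> S"
  shows "\<exists>i j. i < j \<and> emb (s i) (s j)"
proof (rule ccontr)
  assume "\<not> ?thesis"
  then have "bad S s" using sS unfolding bad_def by blast
  then obtain m where m: "bad S m"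
    and minimal: "\<And>t k. bad S t \<Longrightarrow> \<forall>i<k. t i = m i \<Longrightarrow> length (m k) \<le> length (t k)"
    using minimal_bad_seq by blast
  have ne: "m k \<noteq> []" for k
  proof
    assume "m k = []"
    then have "emb (m k) (m (Suc k))" by (simp add: emb_Nil)
    then show False using m unfolding bad_def by blast
  qed
  have "hd (m k) \<in> S" for k using m hd_in_set[OF ne[of k]] unfolding bad_def by blast
  then obtain q :: "nat \<Rightarrow> nat" where q: "strict_mono q" "\<And>i j. i \<le> j \<Longrightarrow> hd (m (q j)) \<le> hd (m (q i))"
    using anti_wo_nonincreasing_subseq[OF aw, of "\<lambda>k. hd (m k)"] by blast
  let ?t = "\<lambda>k. if k < q 0 then m k else tl (m (q (k - q 0)))"
  have "length (m (q 0)) \<le> length (?t (q 0))" by (rule minimal[OF bad_tails[OF m ne q]]) auto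
  then show False using ne[of "q 0"] by (cases "m (q 0)") auto
qed

section \<open>Neumann's lemma\<close>

lemma sum_list_neg:
  fixes w :: "'a::linordered_ab_group_add list"
  assumes "\<forall>x\<in>set w. x < 0"
  shows "sum_list w \<le> 0" "w \<noteq> [] \<Longrightarrow> sum_list w < 0"
  using assms by (induct w) (auto simp: add_neg_nonpos add_nonpos_nonpos)

lemma emb_sum:
  fixes u w :: "'a::linordered_ab_group_add list"
  assumes "emb u w" "\<forall>x\<in>set w. x < 0"
  shows "sum_list w \<le> sum_list u \<and> (length u < length w \<longrightarrow> sum_list w < sum_list u)"
  using assms
proof (induct rule: emb.induct)
  case (emb_Nil w)
  then show ?case using sum_list_neg[of w] by auto
next
  case (emb_skip u w x)
  then have "sum_list w \<le> sum_list u" "x < 0" by auto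
  then have "x + sum_list w < sum_list u" using add_less_le_mono[of x 0] by simp
  then show ?case by simp
next
  case (emb_match u w y x)
  then show ?case by (auto intro: add_mono add_le_less_mono)
qed

definition sums_of_length :: "'a::monoid_add set \<Rightarrow> nat \<Rightarrow> 'a set" where
  "sums_of_length S i = {sum_list w | w. length w = i \<and> set w \<subseteq> S}"

definition finite_sums :: "'a::monoid_add set \<Rightarrow> 'a set" where
  "finite_sums S = {sum_list w | w. w \<noteq> [] \<and> set w \<subseteq> S}"

lemma sums_of_length_finite_sums: "i \<noteq> 0 \<Longrightarrow> sums_of_length S i \<subseteq> finite_sums S"
  unfolding sums_of_length_def finite_sums_def by auto

lemma finite_sums_base: "x \<in> S \<Longrightarrow> x \<in> finite_sums S"
  unfolding finite_sums_def by (intro CollectI exI[of _ "[x]"]) auto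

lemma finite_sums_add: "x \<in> finite_sums S \<Longrightarrow> y \<in> finite_sums S \<Longrightarrow> x + y \<in> finite_sums S"
  unfolding finite_sums_def by clarify (metis append_is_Nil_conv set_append sum_list_append le_sup_iff)

lemma finite_sums_induct:
  assumes "z \<in> finite_sums S" "\<And>x. x \<in> S \<Longrightarrow> P x" "\<And>x y. P x \<Longrightarrow> P y \<Longrightarrow> P (x + y)"
  shows "P z"
proof -
  obtain w where w: "w \<noteq> []" "set w \<subseteq> S" "z = sum_list w" using assms(1) unfolding finite_sums_def by blast
  have "w \<noteq> [] \<Longrightarrow> set w \<subseteq> S \<Longrightarrow> P (sum_list w)"
  proof (induct w)
    case (Cons x w)
    then show ?case using assms(2,3) by (cases "w = []") auto
  qed simp
  then show "P z" using w by simp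
qed

lemma sums_of_length_neg:
  fixes S :: "'a::linordered_ab_group_add set"
  assumes "\<forall>x\<in>S. x < 0" "g \<in> sums_of_length S i"
  shows "g \<le> 0" "i \<noteq> 0 \<Longrightarrow> g < 0"
proof -
  obtain w where w: "length w = i" "set w \<subseteq> S" "g = sum_list w"
    using assms(2) unfolding sums_of_length_def by blast
  then have "\<forall>x\<in>set w. x < 0" using assms(1) by blast
  then show "g \<le> 0" "i \<noteq> 0 \<Longrightarrow> g < 0" using sum_list_neg[of w] w by auto
qed

lemma neumann_anti_wo:
  fixes S :: "'a::linordered_ab_group_add set"
  assumes aw: "anti_wo S" and neg: "\<forall>x\<in>S. x < 0"
  shows "anti_wo (finite_sums S)"
proof (rule anti_wo_seq)
  fix f :: "nat \<Rightarrow> 'a" assume fM: "\<forall>i. f i \<in> finite_sums S"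
  show "\<exists>i. \<not> f i < f (Suc i)"
  proof (rule ccontr)
    assume "\<not> ?thesis"
    then have sm: "strict_mono f" by (simp add: strict_mono_Suc_iff)
    define w where "w i = (SOME w. set w \<subseteq> S \<and> sum_list w = f i)" for i
    have "set (w i) \<subseteq> S \<and> sum_list (w i) = f i" for i
    proof -
      have "\<exists>w. set w \<subseteq> S \<and> sum_list w = f i" using fM[rule_format, of i] unfolding finite_sums_def by auto
      then show ?thesis unfolding w_def by (rule someI_ex)
    qed
    then have w: "\<And>i. set (w i) \<subseteq> S" "\<And>i. sum_list (w i) = f i" by auto
    obtain i j where ij: "i < j" "emb (w i) (w j)" using higman[OF aw] w(1) by blast
    have "\<forall>x\<in>set (w j). x < 0" using neg w(1) by blast
    then have "f j \<le> f i" using emb_sum[OF ij(2)] w(2) by simp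
    moreover have "f i < f j" using sm ij(1) by (simp add: strict_mono_less)
    ultimately show False by simp
  qed
qed

lemma neumann_finite:
  fixes S :: "'a::linordered_ab_group_add set"
  assumes aw: "anti_wo S" and neg: "\<forall>x\<in>S. x < 0"
  shows "finite {i. g \<in> sums_of_length S i}"
proof (rule ccontr)
  let ?N = "{i. g \<in> sums_of_length S i}"
  assume inf: "infinite ?N"
  define e where "e = enumerate ?N"
  define w where "w k = (SOME w. length w = e k \<and> set w \<subseteq> S \<and> sum_list w = g)" for k
  have "length (w k) = e k \<and> set (w k) \<subseteq> S \<and> sum_list (w k) = g" for k
  proof -
    have "\<exists>w. length w = e k \<and> set w \<subseteq> S \<and> sum_list w = g"
      using enumerate_in_set[OF inf, of k] unfolding e_def sums_of_length_def by auto
    then show ?thesis unfolding w_def by (rule someI_ex)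
  qed
  then have w: "\<And>k. length (w k) = e k" "\<And>k. set (w k) \<subseteq> S" "\<And>k. sum_list (w k) = g"
    by auto
  obtain i j where ij: "i < j" "emb (w i) (w j)" using higman[OF aw] w(2) by blast
  have "\<forall>x\<in>set (w j). x < 0" using neg w(2) by blast
  moreover have "length (w i) < length (w j)"
    using w(1) strict_mono_enumerate[OF inf] ij(1) unfolding e_def by (simp add: strict_mono_less)
  ultimately have "sum_list (w j) < sum_list (w i)" using emb_sum[OF ij(2)] by simp
  then show False using w(3) by simp
qed

section \<open>Products and powers of series with negative support\<close>

lemma hsupp_iff [simp]: "x \<in> hsupp a \<longleftrightarrow> a x \<noteq> 0"
  by (simp add: hsupp_def)

lemma hmul_nz:
  assumes "hmul a b g \<noteq> 0" shows "\<exists>x. a x \<noteq> 0 \<and> b (g - x) \<noteq> 0"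
proof -
  have "(\<Sum>x\<in>{x. a x \<noteq> 0 \<and> b (g - x) \<noteq> 0}. a x * b (g - x)) \<noteq> 0"
    using assms by (simp add: hmul_def)
  then obtain x where "x \<in> {x. a x \<noteq> 0 \<and> b (g - x) \<noteq> 0}"
    by (meson sum.not_neutral_contains_not_neutral)
  then show ?thesis by blast
qed

lemma hmul_cong_at:
  assumes agree: "\<And>x. (a x \<noteq> 0 \<and> b (g - x) \<noteq> 0) \<or> (a' x \<noteq> 0 \<and> b' (g - x) \<noteq> 0) \<Longrightarrow>
      a x = a' x \<and> b (g - x) = b' (g - x)"
  shows "hmul a b g = hmul a' b' g"
proof -
  have S: "{x. a x \<noteq> 0 \<and> b (g - x) \<noteq> 0} = {x. a' x \<noteq> 0 \<and> b' (g - x) \<noteq> 0}"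
  proof (intro set_eqI iffI)
    fix x assume "x \<in> {x. a x \<noteq> 0 \<and> b (g - x) \<noteq> 0}"
    then show "x \<in> {x. a' x \<noteq> 0 \<and> b' (g - x) \<noteq> 0}" using agree[of x] by simp
  next
    fix x assume "x \<in> {x. a' x \<noteq> 0 \<and> b' (g - x) \<noteq> 0}"
    then show "x \<in> {x. a x \<noteq> 0 \<and> b (g - x) \<noteq> 0}" using agree[of x] by simp
  qed
  have "a x * b (g - x) = a' x * b' (g - x)" if "x \<in> {x. a' x \<noteq> 0 \<and> b' (g - x) \<noteq> 0}" for x
    using agree[of x] that by simp
  then show ?thesis unfolding hmul_def S by (rule sum.cong[OF refl])
qed

lemma hpow_0 [simp]: "hpow a 0 = hconst 1"
  by (simp add: hpow_def)

lemma hpow_Suc: "hpow a (Suc n) = hmul a (hpow a n)"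
  by (simp add: hpow_def)

lemma hpow_1 [simp]: "hpow a 1 = (a :: 'u::ab_group_add \<Rightarrow> 'k::comm_ring_1)"
proof
  fix g
  have "{x. a x \<noteq> 0 \<and> hconst (1::'k) (g - x) \<noteq> 0} = (if a g \<noteq> 0 then {g} else {})"
    by (auto simp: hconst_def)
  then show "hpow a 1 g = a g" by (simp add: hpow_Suc hmul_def hconst_def)
qed

lemma hpow_support:
  fixes e :: "'u::ab_group_add \<Rightarrow> 'k::comm_ring_1"
  shows "hpow e i g \<noteq> 0 \<Longrightarrow> g \<in> sums_of_length (hsupp e) i"
proof (induct i arbitrary: g)
  case 0
  then have "g = 0" by (auto simp: hconst_def split: if_splits)
  then show ?case unfolding sums_of_length_def by (intro CollectI exI[of _ "[]"]) auto
next
  case (Suc i)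
  then obtain x where x: "e x \<noteq> 0" "hpow e i (g - x) \<noteq> 0" using hmul_nz by (metis hpow_Suc)
  then obtain w where w: "length w = i" "set w \<subseteq> hsupp e" "g - x = sum_list w"
    using Suc unfolding sums_of_length_def by blast
  then have "g = sum_list (x # w)" by (simp add: algebra_simps)
  then show ?case unfolding sums_of_length_def using w x by (intro CollectI exI[of _ "x # w"]) auto
qed

definition negsupp :: "('u::linordered_ab_group_add \<Rightarrow> 'k::zero) \<Rightarrow> bool" where
  "negsupp e \<longleftrightarrow> (\<forall>x. e x \<noteq> 0 \<longrightarrow> x < 0)"

lemma hpow_neg:
  fixes e :: "'u::linordered_ab_group_add \<Rightarrow> 'k::comm_ring_1"
  assumes "negsupp e" "hpow e i g \<noteq> 0"
  shows "g \<le> 0" "i \<noteq> 0 \<Longrightarrow> g < 0"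
  using sums_of_length_neg[OF _ hpow_support[OF assms(2)]] assms(1) unfolding negsupp_def by auto

lemma hpow_term_neg:
  fixes e :: "'u::linordered_ab_group_add \<Rightarrow> 'k::comm_ring_1"
  assumes "negsupp e" "e x \<noteq> 0" "hpow e i (y - x) \<noteq> 0"
  shows "x < 0" "y - x \<le> 0" "i \<noteq> 0 \<Longrightarrow> y - x < 0"
  using assms hpow_neg[OF assms(1,3)] unfolding negsupp_def by auto

lemma hpow_local:
  fixes e e' :: "'u::linordered_ab_group_add \<Rightarrow> 'k::comm_ring_1"
  assumes ne: "negsupp e" "negsupp e'" and agree: "\<forall>y\<ge>g. e y = e' y"
  shows "\<forall>y\<ge>g. hpow e i y = hpow e' i y"
proof (induct i)
  case (Suc i)
  show ?case
  proof (intro allI impI)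
    fix y assume yg: "g \<le> y"
    have "hmul e (hpow e i) y = hmul e' (hpow e' i) y"
    proof (rule hmul_cong_at)
      fix x assume "(e x \<noteq> 0 \<and> hpow e i (y - x) \<noteq> 0) \<or> (e' x \<noteq> 0 \<and> hpow e' i (y - x) \<noteq> 0)"
      then have "x < 0" "y - x \<le> 0" using hpow_term_neg[OF ne(1)] hpow_term_neg[OF ne(2)] by blast+
      moreover have "y \<le> y - x" using \<open>x < 0\<close> by simp
      ultimately have "g \<le> x" "g \<le> y - x" using yg by (auto intro: order_trans)
      then show "e x = e' x \<and> hpow e i (y - x) = hpow e' i (y - x)" using agree Suc by auto
    qed
    then show "hpow e (Suc i) y = hpow e' (Suc i) y" by (simp add: hpow_Suc)
  qed
qed simp

lemma hpow_local_strict: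
  fixes e e' :: "'u::linordered_ab_group_add \<Rightarrow> 'k::comm_ring_1"
  assumes ne: "negsupp e" "negsupp e'" and agree: "\<forall>y>g. e y = e' y"
  shows "hpow e (Suc (Suc j)) g = hpow e' (Suc (Suc j)) g"
proof -
  have "hmul e (hpow e (Suc j)) g = hmul e' (hpow e' (Suc j)) g"
  proof (rule hmul_cong_at)
    fix x assume "(e x \<noteq> 0 \<and> hpow e (Suc j) (g - x) \<noteq> 0) \<or> (e' x \<noteq> 0 \<and> hpow e' (Suc j) (g - x) \<noteq> 0)"
    then have x: "x < 0" "g - x < 0" using hpow_term_neg[OF ne(1)] hpow_term_neg[OF ne(2)] by blast+
    have "g < g - x" using x(1) by simp
    then have "\<forall>y\<ge>g - x. e y = e' y" using agree by (meson less_le_trans)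
    then have "hpow e (Suc j) (g - x) = hpow e' (Suc j) (g - x)" using hpow_local[OF ne] by blast
    moreover have "e x = e' x" using agree x(2) by simp
    ultimately show "e x = e' x \<and> hpow e (Suc j) (g - x) = hpow e' (Suc j) (g - x)" by simp
  qed
  then show ?thesis by (simp add: hpow_Suc)
qed

text \<open>By Neumann's lemma only finitely many powers of an infinitesimal contribute to a
  given exponent.\<close>

lemma finite_hpow_nz:
  assumes "anti_wo (hsupp e)" "negsupp e"
  shows "finite {i. hpow e i g \<noteq> 0}"
proof -
  have "finite {i. g \<in> sums_of_length (hsupp e) i}"
    by (rule neumann_finite) (use assms in \<open>auto simp: negsupp_def\<close>)
  then show ?thesis by (rule finite_subset[rotated]) (auto intro: hpow_support)
qed

section \<open>The logarithm series log(1 + e) of an infinitesimal\<close>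

definition log_coeff :: "nat \<Rightarrow> 'k::linordered_field" where
  "log_coeff i = (-1) ^ (i - 1) / of_nat i"

text \<open>The series \<Sum>i\<ge>1 (-1)^(i-1) e^i / i, written exactly as in the definition of hLog.\<close>

definition log_series :: "('u::linordered_ab_group_add \<Rightarrow> 'k::linordered_field) \<Rightarrow> 'u \<Rightarrow> 'k" where
  "log_series e = hsum (\<lambda>i::nat. hscale ((-1) ^ (i - 1) / of_nat i) (hpow e i)) {1..}"

definition log_series_tail :: "('u::linordered_ab_group_add \<Rightarrow> 'k::linordered_field) \<Rightarrow> 'u \<Rightarrow> 'k" where
  "log_series_tail e g = (\<Sum>i\<in>{i. 2 \<le> i \<and> hpow e i g \<noteq> 0}. log_coeff i * hpow e i g)"

lemma log_series_eq: "log_series e g = (\<Sum>i\<in>{i. 1 \<le> i \<and> hpow e i g \<noteq> 0}. log_coeff i * hpow e i g)"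
proof -
  have "{i\<in>{1..}. log_coeff i * hpow e i g \<noteq> 0} = {i. 1 \<le> i \<and> hpow e i g \<noteq> 0}"
    unfolding log_coeff_def by force
  then show ?thesis unfolding log_series_def hsum_def hscale_def log_coeff_def by simp
qed

lemma log_series_nz: "log_series e g \<noteq> 0 \<Longrightarrow> \<exists>i\<ge>1. hpow e i g \<noteq> 0"
proof -
  assume "log_series e g \<noteq> 0"
  then obtain i where "i \<in> {i. 1 \<le> i \<and> hpow e i g \<noteq> 0}" unfolding log_series_eq
    by (meson sum.not_neutral_contains_not_neutral)
  then show ?thesis by blast
qed

lemma log_series_split:
  assumes fin: "finite {i. hpow e i g \<noteq> 0}"
  shows "log_series e g = e g + log_series_tail e g"
proof -
  let ?A = "{i. 1 \<le> i \<and> hpow e i g \<noteq> 0}"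
  let ?B = "{i. 2 \<le> i \<and> hpow e i g \<noteq> 0}"
  let ?f = "\<lambda>i. log_coeff i * hpow e i g"
  have fB: "finite ?B" using fin by (rule finite_subset[rotated]) auto
  have "sum ?f ?A = sum ?f (insert 1 ?B)"
    by (rule sum.mono_neutral_left) (use fB in auto)
  also have "\<dots> = ?f 1 + sum ?f ?B" using fB by (subst sum.insert) auto
  also have "?f 1 = e g" using hpow_1[of e] by (simp add: log_coeff_def)
  finally show ?thesis unfolding log_series_eq log_series_tail_def .
qed

lemma log_series_tail_local:
  assumes ne: "negsupp e" "negsupp e'" and agree: "\<forall>y>g. e y = e' y"
  shows "log_series_tail e g = log_series_tail e' g"
proof -
  have pow: "hpow e i g = hpow e' i g" if "2 \<le> i" for i
  proof -
    have "i = Suc (Suc (i - 2))" using that by simp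
    then show ?thesis using hpow_local_strict[OF ne agree, of "i - 2"] by simp
  qed
  then have "{i. 2 \<le> i \<and> hpow e i g \<noteq> 0} = {i. 2 \<le> i \<and> hpow e' i g \<noteq> 0}" by auto
  then show ?thesis unfolding log_series_tail_def by (simp add: pow)
qed

lemma log_series_negsupp:
  assumes "negsupp e" shows "negsupp (log_series e)"
  unfolding negsupp_def
proof (intro allI impI)
  fix x assume "log_series e x \<noteq> 0"
  then obtain i where "i \<ge> 1" "hpow e i x \<noteq> 0" using log_series_nz by blast
  then show "x < 0" using hpow_neg(2)[OF assms] by simp
qed

lemma log_series_support:
  assumes "log_series e g \<noteq> 0" shows "g \<in> finite_sums (hsupp e)"
proof -
  obtain i where "i \<ge> 1" "hpow e i g \<noteq> 0" using log_series_nz[OF assms] by blast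
  then have "g \<in> sums_of_length (hsupp e) i" "i \<noteq> 0" using hpow_support by auto
  then show ?thesis using sums_of_length_finite_sums by blast
qed

text \<open>log(1 + e) determines the infinitesimal e: compare both at the largest exponent where
  they differ; there the higher-order terms agree.\<close>

lemma log_series_inj:
  assumes e: "anti_wo (hsupp e)" "negsupp e" and e': "anti_wo (hsupp e')" "negsupp e'"
    and eq: "log_series e = log_series e'"
  shows "e = e'"
proof (rule ccontr)
  assume "e \<noteq> e'"
  let ?D = "{g. e g \<noteq> e' g}"
  have "?D \<noteq> {}" "?D \<subseteq> hsupp e \<union> hsupp e'" using \<open>e \<noteq> e'\<close> by auto
  then obtain g where g: "g \<in> ?D" "\<forall>t\<in>?D. t \<le> g"
    using anti_wo_max[OF anti_wo_Un[OF e(1) e'(1)]] by meson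
  have "\<forall>y>g. e y = e' y" using g(2) leD by blast
  then have "log_series_tail e g = log_series_tail e' g" by (rule log_series_tail_local[OF e(2) e'(2)])
  moreover have "log_series e g = e g + log_series_tail e g"
    by (rule log_series_split[OF finite_hpow_nz[OF e]])
  moreover have "log_series e' g = e' g + log_series_tail e' g"
    by (rule log_series_split[OF finite_hpow_nz[OF e']])
  ultimately have "e g = e' g" using eq by simp
  then show False using g(1) by simp
qed

lemma wf_downwards:
  fixes M :: "'a::linorder set"
  assumes aw: "anti_wo M"
  shows "wf {(y, x). y \<in> M \<and> x < y}"
  unfolding wf_eq_minimal
proof (intro allI impI)
  fix x :: 'a and Q assume "x \<in> Q"
  show "\<exists>z\<in>Q. \<forall>y. (y, z) \<in> {(y, x). y \<in> M \<and> x < y} \<longrightarrow> y \<notin> Q"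
  proof (cases "Q \<inter> M = {}")
    case True
    then show ?thesis using \<open>x \<in> Q\<close> by blast
  next
    case False
    then obtain z where z: "z \<in> Q" "\<forall>t\<in>Q \<inter> M. t \<le> z" using anti_wo_max[OF aw Int_lower2] by blast
    have "y \<notin> Q" if "(y, z) \<in> {(y, x). y \<in> M \<and> x < y}" for y
      using that z(2) leD by auto
    then show ?thesis using z(1) by blast
  qed
qed

text \<open>Every infinitesimal d is log(1 + e) for an infinitesimal e supported in the semigroup
  generated by supp d: the coefficients of e are determined by well-founded recursion
  downwards, e(x) = d(x) - (terms of order \<ge> 2 of e at exponents above x).\<close>

lemma log_series_surj:
  fixes d :: "'u::linordered_ab_group_add \<Rightarrow> 'k::linordered_field"
  assumes ad: "anti_wo (hsupp d)" and nd: "negsupp d"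
  shows "\<exists>e. hsupp e \<subseteq> finite_sums (hsupp d) \<and> log_series e = d"
proof -
  let ?M = "finite_sums (hsupp d)"
  have aM: "anti_wo ?M" by (rule neumann_anti_wo[OF ad]) (use nd in \<open>auto simp: negsupp_def\<close>)
  have Mneg: "x \<in> ?M \<Longrightarrow> x < 0" for x
    by (erule finite_sums_induct) (use nd in \<open>auto simp: negsupp_def add_neg_neg\<close>)
  define F where "F rec x = d x - log_series_tail (\<lambda>y. if y \<in> ?M \<and> x < y then rec y else 0) x"
    for rec x
  define W where "W = wfrec {(y, x). y \<in> ?M \<and> x < y} F"
  define e where "e x = (if x \<in> ?M then W x else 0)" for x
  have ne: "negsupp e" unfolding negsupp_def e_def using Mneg by auto
  have se: "hsupp e \<subseteq> ?M" unfolding e_def by (auto split: if_splits)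
  have ae: "anti_wo (hsupp e)" using anti_wo_subset[OF aM se] .
  have rec: "e x = d x - log_series_tail e x" if "x \<in> ?M" for x
  proof -
    have "W x = F (cut W {(y, x). y \<in> ?M \<and> x < y} x) x"
      unfolding W_def by (rule wfrec[OF wf_downwards[OF aM]])
    also have "\<dots> = d x - log_series_tail (\<lambda>y. if x < y then e y else 0) x"
    proof -
      have "(\<lambda>y. if y \<in> ?M \<and> x < y then cut W {(y, x). y \<in> ?M \<and> x < y} x y else 0) =
          (\<lambda>y. if x < y then e y else 0)"
        unfolding cut_def e_def by auto
      then show ?thesis unfolding F_def by simp
    qed
    also have "log_series_tail (\<lambda>y. if x < y then e y else 0) x = log_series_tail e x"
      by (rule log_series_tail_local) (use ne in \<open>auto simp: negsupp_def\<close>)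
    finally show ?thesis using that unfolding e_def by simp
  qed
  have "log_series e x = d x" for x
  proof (cases "x \<in> ?M")
    case True
    then show ?thesis using log_series_split[OF finite_hpow_nz[OF ae ne]] rec[OF True] by simp
  next
    case False
    have "z \<in> ?M" if "z \<in> finite_sums (hsupp e)" for z
      by (rule finite_sums_induct[OF that]) (use se finite_sums_add in auto)
    then have "log_series e x = 0" using log_series_support False by blast
    moreover have "d x = 0" using False finite_sums_base[of x "hsupp d"] by auto
    ultimately show ?thesis by simp
  qed
  then show ?thesis using se by blast
qed

section \<open>Valuation, decomposition of positive series, and the logarithm\<close>

lemma hval_eq: "m \<in> hsupp a \<Longrightarrow> \<forall>t\<in>hsupp a. t \<le> m \<Longrightarrow> hval a = m"
  unfolding hval_def by (rule the_equality) (auto intro: order.antisym)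

lemma hval_ex:
  assumes "anti_wo (hsupp a)" "a \<noteq> hzero"
  shows "hval a \<in> hsupp a" "\<forall>t\<in>hsupp a. t \<le> hval a"
proof -
  have "hsupp a \<noteq> {}" using assms(2) unfolding hzero_def hsupp_def by auto
  then obtain m where "m \<in> hsupp a" "\<forall>t\<in>hsupp a. t \<le> m" using anti_wo_max[OF assms(1) subset_refl] by blast
  then show "hval a \<in> hsupp a" "\<forall>t\<in>hsupp a. t \<le> hval a" using hval_eq by metis+
qed

lemma hless_irrefl: "\<not> hless a (a :: 'u::linordered_ab_group_add \<Rightarrow> 'k::linordered_field)"
  unfolding hless_def hpos_def hsub_def hzero_def by simp

lemma hless_asym:
  fixes a b :: "'u::linordered_ab_group_add \<Rightarrow> 'k::linordered_field"
  assumes "hless a b" shows "\<not> hless b a"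
proof
  assume "hless b a"
  have "hsupp (hsub a b) = hsupp (hsub b a)" unfolding hsupp_def hsub_def by auto
  then have "hval (hsub a b) = hval (hsub b a)" unfolding hval_def by simp
  moreover have "0 < hsub b a (hval (hsub b a))" "0 < hsub a b (hval (hsub a b))"
    using assms \<open>hless b a\<close> unfolding hless_def hpos_def by auto
  ultimately show False unfolding hsub_def by simp
qed

lemma anti_wo_hsub:
  assumes "anti_wo (hsupp a)" "anti_wo (hsupp b)"
  shows "anti_wo (hsupp (hsub a (b :: 'u::linorder \<Rightarrow> 'k::ab_group_add)))"
proof -
  have "hsupp (hsub a b) \<subseteq> hsupp a \<union> hsupp b" unfolding hsupp_def hsub_def by auto
  then show ?thesis using anti_wo_subset[OF anti_wo_Un[OF assms]] by blast
qed

lemma hahn_mono: "S \<subseteq> T \<Longrightarrow> hahn S \<subseteq> hahn T"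
  unfolding hahn_def by auto

lemma ELser_iff: "a \<in> ELser H \<longleftrightarrow> (\<exists>n. a \<in> hahn (H n))"
  unfolding ELser_def by blast

lemma subgroup_zero: "subgroup_of H \<Longrightarrow> 0 \<in> H"
  unfolding subgroup_of_def by blast

lemma subgroup_add: "subgroup_of H \<Longrightarrow> x \<in> H \<Longrightarrow> y \<in> H \<Longrightarrow> x + y \<in> H"
  unfolding subgroup_of_def by blast

lemma subgroup_diff: "subgroup_of H \<Longrightarrow> x \<in> H \<Longrightarrow> y \<in> H \<Longrightarrow> x - y \<in> H"
  unfolding subgroup_of_def by (metis diff_conv_add_uminus)

text \<open>The infinitesimal part \<epsilon> of a positive series a = m c (1 + \<epsilon>), where m = v(a) and
  c = a(v(a)).\<close>

definition eps_part :: "('u::linordered_ab_group_add \<Rightarrow> 'k::linordered_field) \<Rightarrow> 'u \<Rightarrow> 'k" where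
  "eps_part a = hsub (\<lambda>h. a (h + hval a) / a (hval a)) (hconst 1)"

lemma hLog_eq:
  "hLog lg lam a = hadd (hadd (lam (hval a)) (hconst (lg (a (hval a))))) (log_series (eps_part a))"
  unfolding hLog_def Let_def log_series_def eps_part_def ..

lemma positive_decomp:
  fixes a :: "'u::linordered_ab_group_add \<Rightarrow> 'k::linordered_field"
  assumes sg: "subgroup_of H" and a: "a \<in> hahn H" "hpos a"
  shows "hval a \<in> H" "0 < a (hval a)" "negsupp (eps_part a)" "anti_wo (hsupp (eps_part a))"
    "hsupp (eps_part a) \<subseteq> H"
    "\<And>x. a x = a (hval a) * (eps_part a (x - hval a) + hconst 1 (x - hval a))"
proof -
  let ?m = "hval a" let ?c = "a (hval a)"
  have aw: "anti_wo (hsupp a)" and sH: "hsupp a \<subseteq> H" using a(1) unfolding hahn_def by auto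
  have nz: "a \<noteq> hzero" using a(2) unfolding hpos_def by blast
  have m: "?m \<in> hsupp a" "\<forall>t\<in>hsupp a. t \<le> ?m" using hval_ex[OF aw nz] by auto
  show mH: "?m \<in> H" using m sH by blast
  show c: "0 < ?c" using a(2) unfolding hpos_def by blast
  have ep: "eps_part a h = a (h + ?m) / ?c - hconst 1 h" for h unfolding eps_part_def hsub_def by simp
  have epnz: "h \<noteq> 0 \<and> h + ?m \<in> hsupp a" if "eps_part a h \<noteq> 0" for h
    using that c by (auto simp: ep hconst_def split: if_splits)
  show "negsupp (eps_part a)" unfolding negsupp_def
  proof (intro allI impI)
    fix h assume "eps_part a h \<noteq> 0"
    then have "h \<noteq> 0" "h + ?m \<le> ?m" using epnz m(2) by blast+
    then show "h < 0" by (simp add: order_le_less)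
  qed
  have shift: "hsupp (eps_part a) \<subseteq> (\<lambda>x. x - ?m) ` hsupp a"
  proof
    fix h assume "h \<in> hsupp (eps_part a)"
    then have "h + ?m \<in> hsupp a" using epnz by simp
    then show "h \<in> (\<lambda>x. x - ?m) ` hsupp a" by (rule rev_image_eqI) simp
  qed
  moreover have "anti_wo ((\<lambda>x. x - ?m) ` hsupp a)" by (rule anti_wo_image[OF aw]) simp
  ultimately show "anti_wo (hsupp (eps_part a))" by (rule anti_wo_subset[rotated])
  show "hsupp (eps_part a) \<subseteq> H" using shift sH subgroup_diff[OF sg _ mH] by auto
  fix x
  have "eps_part a (x - ?m) + hconst 1 (x - ?m) = a x / ?c" by (simp add: ep)
  then show "a x = ?c * (eps_part a (x - ?m) + hconst 1 (x - ?m))" using c by simp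
qed

lemma positive_compose:
  fixes e :: "'u::linordered_ab_group_add \<Rightarrow> 'k::linordered_field"
  assumes sg: "subgroup_of H" and m: "m \<in> H" and c: "0 < c"
    and e: "negsupp e" "anti_wo (hsupp e)" "hsupp e \<subseteq> H"
  defines "a \<equiv> \<lambda>x. c * (e (x - m) + hconst 1 (x - m))"
  shows "a \<in> hahn H" "hpos a" "hval a = m" "a (hval a) = c" "eps_part a = e"
proof -
  have e0: "e 0 = 0" using e(1) unfolding negsupp_def by blast
  have am: "a m = c" using e0 by (simp add: a_def hconst_def)
  have suppa: "hsupp a \<subseteq> (\<lambda>x. x + m) ` insert 0 (hsupp e)"
  proof
    fix x assume "x \<in> hsupp a"
    then have "x - m \<in> insert 0 (hsupp e)" unfolding a_def hconst_def by (auto split: if_splits)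
    then show "x \<in> (\<lambda>x. x + m) ` insert 0 (hsupp e)" by (rule rev_image_eqI) simp
  qed
  have "anti_wo (hsupp a)"
    by (rule anti_wo_subset[OF anti_wo_image[OF anti_wo_insert[OF e(2)]] suppa]) simp
  moreover have "hsupp a \<subseteq> H"
  proof
    fix x assume "x \<in> hsupp a"
    then obtain y where "y \<in> insert 0 (hsupp e)" "x = y + m" using suppa by blast
    then show "x \<in> H" using e(3) subgroup_zero[OF sg] subgroup_add[OF sg _ m] by auto
  qed
  ultimately show "a \<in> hahn H" unfolding hahn_def by blast
  show hv: "hval a = m"
  proof (rule hval_eq)
    show "m \<in> hsupp a" using am c by simp
    show "\<forall>t\<in>hsupp a. t \<le> m"
    proof
      fix t assume "t \<in> hsupp a"
      then have "t - m \<in> insert 0 (hsupp e)" using suppa by auto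
      then have "t - m \<le> 0" using e(1) unfolding negsupp_def by (auto simp: order_le_less)
      then show "t \<le> m" by simp
    qed
  qed
  show "a (hval a) = c" using hv am by simp
  have "a \<noteq> hzero" using am c unfolding hzero_def by (metis less_irrefl)
  then show "hpos a" unfolding hpos_def hv am using c by simp
  show "eps_part a = e" unfolding eps_part_def hv am
    by (rule ext) (use c in \<open>simp add: hsub_def a_def\<close>)
qed

lemma hLog_coeffs:
  assumes eps: "negsupp (eps_part a)" and lam_pos: "\<And>g. lam (hval a) g \<noteq> 0 \<Longrightarrow> 0 < g"
  shows "0 < g \<Longrightarrow> hLog lg lam a g = lam (hval a) g"
    "hLog lg lam a 0 = lg (a (hval a))"
    "g < 0 \<Longrightarrow> hLog lg lam a g = log_series (eps_part a) g"
proof -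
  have L: "hLog lg lam a g = lam (hval a) g + hconst (lg (a (hval a))) g + log_series (eps_part a) g"
    for g by (simp add: hLog_eq hadd_def)
  have neg: "log_series (eps_part a) g = 0" if "\<not> g < 0" for g
    using log_series_negsupp[OF eps] that unfolding negsupp_def by blast
  have pos: "lam (hval a) g = 0" if "\<not> 0 < g" for g using lam_pos that by blast
  show "0 < g \<Longrightarrow> hLog lg lam a g = lam (hval a) g" using L neg by (auto simp: hconst_def)
  show "hLog lg lam a 0 = lg (a (hval a))" using L neg pos by (simp add: hconst_def)
  show "g < 0 \<Longrightarrow> hLog lg lam a g = log_series (eps_part a) g" using L pos by (auto simp: hconst_def)
qed

section \<open>The exponential tower and bijectivity of Log\<close>

locale tower =
  fixes G :: "'u::linordered_ab_group_add set" and l :: "'u \<Rightarrow> 'u \<Rightarrow> 'k::linordered_field"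
    and H :: "nat \<Rightarrow> 'u set" and lam :: "'u \<Rightarrow> 'u \<Rightarrow> 'k"
  assumes subgroup_G: "subgroup_of G" and T: "EL_tower G l H lam"
begin

lemma H0: "H 0 = G"
  using T unfolding EL_tower_def by blast

lemma lam_l: "g \<in> G \<Longrightarrow> lam g = l g"
  using T unfolding EL_tower_def by blast

lemma H_Suc: "H n \<subseteq> H (Suc n)"
  using T unfolding EL_tower_def by blast

lemma H_mono: "n \<le> m \<Longrightarrow> H n \<subseteq> H m"
  using lift_Suc_mono_le[of H, OF H_Suc] .

lemma subgroup_H: "subgroup_of (H n)"
  using T subgroup_G unfolding EL_tower_def by (cases n) (auto simp: H0)

lemma lam_bij: "bij_betw lam (H (Suc n)) (hahn {g\<in>H n. 0 < g})"
  using T unfolding EL_tower_def by blast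

lemma lam_add: "x \<in> H (Suc n) \<Longrightarrow> y \<in> H (Suc n) \<Longrightarrow> lam (x + y) = hadd (lam x) (lam y)"
  using T unfolding EL_tower_def by blast

lemma lam_mono: "x \<in> H (Suc n) \<Longrightarrow> y \<in> H (Suc n) \<Longrightarrow> x < y \<Longrightarrow> hless (lam x) (lam y)"
  using T unfolding EL_tower_def by blast

lemma lam_in: "m \<in> H (Suc n) \<Longrightarrow> lam m \<in> hahn {g\<in>H n. 0 < g}"
  using bij_betw_apply[OF lam_bij] .

lemma lam_inj: "inj_on lam (H (Suc n))"
  using lam_bij bij_betw_def by blast

lemma lam_less_iff:
  assumes "x \<in> H (Suc n)" "y \<in> H (Suc n)"
  shows "hless (lam x) (lam y) \<longleftrightarrow> x < y"
  using lam_mono[OF assms] lam_mono[OF assms(2,1)] hless_asym hless_irrefl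
  by (cases x y rule: linorder_cases) auto

lemma lam_pos:
  assumes "m \<in> H n" "lam m g \<noteq> 0" shows "0 < g"
proof -
  have "lam m \<in> hahn {g\<in>H n. 0 < g}" using assms(1) H_Suc lam_in by blast
  then show ?thesis using assms(2) unfolding hahn_def by auto
qed

lemma common_level:
  assumes "a \<in> ELser H" "b \<in> ELser H"
  obtains n where "a \<in> hahn (H n)" "b \<in> hahn (H n)"
proof -
  obtain n1 n2 where "a \<in> hahn (H n1)" "b \<in> hahn (H n2)" using assms unfolding ELser_iff by blast
  then show ?thesis
    using that hahn_mono[OF H_mono[of n1 "max n1 n2"]] hahn_mono[OF H_mono[of n2 "max n1 n2"]] by auto
qed

text \<open>Log is injective on positive series: the three components of Log a determine
  v(a) (as lam is injective), a(v(a)) (as log is) and \<epsilon> (as log(1 + \<epsilon>) is).\<close>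

lemma Log_inj:
  fixes lg :: "'k \<Rightarrow> 'k"
  assumes lg_bij: "bij_betw lg {x::'k. 0 < x} UNIV"
    and a: "a \<in> ELser H" "hpos a" and b: "b \<in> ELser H" "hpos b"
    and eq: "hLog lg lam a = hLog lg lam b"
  shows "a = b"
proof -
  obtain n where an: "a \<in> hahn (H n)" and bn: "b \<in> hahn (H n)" using common_level[OF a(1) b(1)] .
  note da = positive_decomp[OF subgroup_H an a(2)] and db = positive_decomp[OF subgroup_H bn b(2)]
  note La = hLog_coeffs[where lg = lg and lam = lam, OF da(3) lam_pos[OF da(1)]]
    and Lb = hLog_coeffs[where lg = lg and lam = lam, OF db(3) lam_pos[OF db(1)]]
  have "lam (hval a) g = lam (hval b) g" for g
  proof (cases "0 < g")
    case True
    then show ?thesis using La(1) Lb(1) eq by metis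
  next
    case False
    then have "lam (hval a) g = 0" "lam (hval b) g = 0"
      using lam_pos[OF da(1), of g] lam_pos[OF db(1), of g] by blast+
    then show ?thesis by simp
  qed
  moreover have "hval a \<in> H (Suc n)" "hval b \<in> H (Suc n)" using da(1) db(1) H_Suc by blast+
  ultimately have v: "hval a = hval b" using lam_inj unfolding inj_on_def by blast
  have "lg (a (hval a)) = lg (b (hval b))" using La(2) Lb(2) eq by metis
  then have c: "a (hval a) = b (hval b)" using lg_bij da(2) db(2) unfolding bij_betw_def inj_on_def by blast
  have "log_series (eps_part a) g = log_series (eps_part b) g" for g
  proof (cases "g < 0")
    case True
    then show ?thesis using La(3) Lb(3) eq by metis
  next
    case False
    then have "log_series (eps_part a) g = 0" "log_series (eps_part b) g = 0"
      using log_series_negsupp[OF da(3)] log_series_negsupp[OF db(3)] unfolding negsupp_def by blast+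
    then show ?thesis by simp
  qed
  then have "eps_part a = eps_part b" using log_series_inj da(3,4) db(3,4) by blast
  then show "a = b" using da(6) db(6) v c by (intro ext) metis
qed

text \<open>Log is surjective onto the EL-field: split b into its purely infinite part (a value of
  lam), its constant term (a value of log) and its infinitesimal part (a value of log(1 + e)).\<close>

lemma Log_surj:
  fixes lg :: "'k \<Rightarrow> 'k"
  assumes lg_bij: "bij_betw lg {x::'k. 0 < x} UNIV" and b: "b \<in> ELser H"
  shows "\<exists>a\<in>ELser H. hpos a \<and> hLog lg lam a = b"
proof -
  obtain n where bn: "b \<in> hahn (H n)" using b ELser_iff by blast
  then have bw: "anti_wo (hsupp b)" and bH: "hsupp b \<subseteq> H n" unfolding hahn_def by auto
  define bp where "bp g = (if 0 < g then b g else 0)" for g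
  define bm where "bm g = (if g < 0 then b g else 0)" for g
  have "hsupp bp \<subseteq> hsupp b" "hsupp bm \<subseteq> hsupp b" unfolding bp_def bm_def hsupp_def by auto
  then have bpw: "anti_wo (hsupp bp)" and bmw: "anti_wo (hsupp bm)" using anti_wo_subset[OF bw] by auto
  have "bp \<in> hahn {g\<in>H n. 0 < g}" unfolding hahn_def using bpw bH by (auto simp: bp_def split: if_splits)
  then obtain m where m: "m \<in> H (Suc n)" "lam m = bp" using lam_bij unfolding bij_betw_def by (metis imageE)
  obtain c where c: "0 < c" "lg c = b 0"
    using lg_bij unfolding bij_betw_def by (metis UNIV_I imageE mem_Collect_eq)
  have nbm: "negsupp bm" unfolding negsupp_def bm_def by auto
  obtain e where e: "hsupp e \<subseteq> finite_sums (hsupp bm)" "log_series e = bm"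
    using log_series_surj[OF bmw nbm] by blast
  have sums_in: "finite_sums (hsupp bm) \<subseteq> H n \<inter> {x. x < 0}"
  proof
    fix z assume "z \<in> finite_sums (hsupp bm)"
    then show "z \<in> H n \<inter> {x. x < 0}"
      by (rule finite_sums_induct)
        (use bH subgroup_H[of n] in \<open>auto simp: bm_def subgroup_add add_neg_neg split: if_splits\<close>)
  qed
  have "anti_wo (finite_sums (hsupp bm))"
    by (rule neumann_anti_wo[OF bmw]) (use nbm in \<open>auto simp: negsupp_def\<close>)
  then have ew: "anti_wo (hsupp e)" using anti_wo_subset e(1) by blast
  have ne: "negsupp e" and eH: "hsupp e \<subseteq> H (Suc n)"
    using e(1) sums_in H_Suc unfolding negsupp_def by auto
  define a where "a = (\<lambda>x. c * (e (x - m) + hconst 1 (x - m)))"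
  note a = positive_compose[OF subgroup_H m(1) c(1) ne ew eH, folded a_def]
  have am: "a m = c" using ne unfolding a_def negsupp_def hconst_def by auto
  have "hLog lg lam a = b"
  proof
    fix g
    show "hLog lg lam a g = b g"
      unfolding hLog_eq a(3) a(5) am m(2) e(2) c(2)
      by (auto simp: hadd_def bp_def bm_def hconst_def dest: less_asym)
  qed
  moreover have "a \<in> ELser H" using a(1) ELser_iff by blast
  ultimately show ?thesis using a(2) by blast
qed

lemma hExp_eq:
  fixes lg :: "'k \<Rightarrow> 'k"
  assumes lg_bij: "bij_betw lg {x::'k. 0 < x} UNIV"
    and a: "a \<in> ELser H" "hpos a" "hLog lg lam a = b"
  shows "hExp lg H lam b = a"
  unfolding hExp_def
proof (rule the_equality)
  show "a \<in> ELser H \<and> hpos a \<and> hLog lg lam a = b" using a by blast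
  fix y assume "y \<in> ELser H \<and> hpos y \<and> hLog lg lam y = b"
  then show "y = a" using Log_inj[OF lg_bij, of y a] a by simp
qed

end

section \<open>Extending group embeddings to series\<close>

definition supported_on :: "'u set \<Rightarrow> ('u \<Rightarrow> 'k::zero) set" where
  "supported_on D = {a. hsupp a \<subseteq> D}"

lemma supported_onI: "(\<And>x. a x \<noteq> 0 \<Longrightarrow> x \<in> D) \<Longrightarrow> a \<in> supported_on D"
  unfolding supported_on_def by auto

lemma supported_onD: "a \<in> supported_on D \<Longrightarrow> a x \<noteq> 0 \<Longrightarrow> x \<in> D"
  unfolding supported_on_def by auto

lemma hahn_supported_on: "a \<in> hahn S \<Longrightarrow> S \<subseteq> D \<Longrightarrow> a \<in> supported_on D"
  unfolding supported_on_def hahn_def by auto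

lemma supported_on_hadd:
  fixes a b :: "'u \<Rightarrow> 'k::ab_group_add"
  assumes "a \<in> supported_on D" "b \<in> supported_on D"
  shows "hadd a b \<in> supported_on D"
proof (rule supported_onI)
  fix x assume "hadd a b x \<noteq> 0"
  then have "a x \<noteq> 0 \<or> b x \<noteq> 0" by (auto simp: hadd_def)
  then show "x \<in> D" using supported_onD[OF assms(1)] supported_onD[OF assms(2)] by blast
qed

lemma supported_on_hsub:
  fixes a b :: "'u \<Rightarrow> 'k::ab_group_add"
  assumes "a \<in> supported_on D" "b \<in> supported_on D"
  shows "hsub a b \<in> supported_on D"
proof (rule supported_onI)
  fix x assume "hsub a b x \<noteq> 0"
  then have "a x \<noteq> 0 \<or> b x \<noteq> 0" by (auto simp: hsub_def)
  then show "x \<in> D" using supported_onD[OF assms(1)] supported_onD[OF assms(2)] by blast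
qed

lemma supported_on_hscale:
  fixes a :: "'u \<Rightarrow> 'k::mult_zero"
  assumes "a \<in> supported_on D" shows "hscale c a \<in> supported_on D"
proof (rule supported_onI)
  fix x assume "hscale c a x \<noteq> 0"
  then have "a x \<noteq> 0" by (auto simp: hscale_def)
  then show "x \<in> D" using supported_onD[OF assms] by blast
qed

lemma supported_on_hsum:
  assumes "\<And>i. i \<in> I \<Longrightarrow> F i \<in> supported_on D"
  shows "hsum F I \<in> supported_on D"
proof (rule supported_onI)
  fix x assume "hsum F I x \<noteq> 0"
  then obtain i where "i \<in> {i\<in>I. F i x \<noteq> 0}" unfolding hsum_def
    by (meson sum.not_neutral_contains_not_neutral)
  then have "i \<in> I" "F i x \<noteq> 0" by auto
  then show "x \<in> D" using supported_onD[OF assms] by blast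
qed

lemma supported_on_hconst: "subgroup_of D \<Longrightarrow> hconst c \<in> supported_on D"
  by (rule supported_onI) (auto simp: hconst_def subgroup_zero split: if_splits)

lemma supported_on_hmul:
  assumes sg: "subgroup_of D" and a: "a \<in> supported_on D" and b: "b \<in> supported_on D"
  shows "hmul a b \<in> supported_on D"
proof (rule supported_onI)
  fix x assume "hmul a b x \<noteq> 0"
  then obtain y where "a y \<noteq> 0" "b (x - y) \<noteq> 0" using hmul_nz by blast
  then have "(x - y) + y \<in> D" using supported_onD[OF a] supported_onD[OF b] subgroup_add[OF sg] by blast
  then show "x \<in> D" by simp
qed

lemma supported_on_hpow: "subgroup_of D \<Longrightarrow> a \<in> supported_on D \<Longrightarrow> hpow a i \<in> supported_on D"
  by (induct i) (auto simp: hpow_Suc supported_on_hmul supported_on_hconst)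

lemma sext_supp: "sext f a h \<noteq> 0 \<Longrightarrow> \<exists>x. a x \<noteq> 0 \<and> f x = h"
proof -
  assume "sext f a h \<noteq> 0"
  then obtain x where "x \<in> {g. a g \<noteq> 0 \<and> f g = h}" unfolding sext_def
    by (meson sum.not_neutral_contains_not_neutral)
  then show ?thesis by blast
qed

lemma sext_cong: "(\<And>x. a x \<noteq> 0 \<Longrightarrow> f x = f' x) \<Longrightarrow> sext f a = sext f' a"
proof -
  assume agree: "\<And>x. a x \<noteq> 0 \<Longrightarrow> f x = f' x"
  have "{g. a g \<noteq> 0 \<and> f g = h} = {g. a g \<noteq> 0 \<and> f' g = h}" for h using agree by auto
  then show ?thesis unfolding sext_def by simp
qed

lemma sext_monom: "sext f (monom g) = (monom (f g) :: 'v \<Rightarrow> 'k::{comm_monoid_add,zero_neq_one})"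
proof
  fix h
  have "{x. monom g x \<noteq> (0::'k) \<and> f x = h} = (if f g = h then {g} else {})"
    by (auto simp: monom_def)
  then show "sext f (monom g) h = (monom (f g) :: 'v \<Rightarrow> 'k) h" unfolding sext_def by (simp add: monom_def)
qed

lemma sext_at_inj:
  assumes inj: "inj_on f (hsupp a)" and g: "a g \<noteq> 0"
  shows "sext f a (f g) = a g"
proof -
  have "{g'. a g' \<noteq> 0 \<and> f g' = f g} = {g}" using g inj_onD[OF inj] by auto
  then show ?thesis unfolding sext_def by simp
qed

lemma sext_supp_inj:
  assumes inj: "inj_on f (hsupp a)"
  shows "hsupp (sext f a) = f ` hsupp a"
proof (intro set_eqI iffI)
  fix x assume "x \<in> hsupp (sext f a)"
  then show "x \<in> f ` hsupp a" using sext_supp[of f a x] by auto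
next
  fix x assume "x \<in> f ` hsupp a"
  then obtain g where "a g \<noteq> 0" "x = f g" by auto
  then show "x \<in> hsupp (sext f a)" using sext_at_inj[OF inj] by simp
qed

locale ghom =
  fixes D :: "'u::linordered_ab_group_add set" and f :: "'u \<Rightarrow> 'v::linordered_ab_group_add"
  assumes subgroup_D: "subgroup_of D"
    and hom: "\<forall>x\<in>D. \<forall>y\<in>D. f (x + y) = f x + f y"
    and mono: "\<forall>x\<in>D. \<forall>y\<in>D. x < y \<longrightarrow> f x < f y"
begin

lemma inj: "inj_on f D"
proof (rule inj_onI)
  fix x y assume "x \<in> D" "y \<in> D" "f x = f y"
  then show "x = y" using mono by (metis less_irrefl neq_iff)
qed

lemma f_zero: "f 0 = 0"
proof -
  have "f (0 + 0) = f 0 + f 0" using hom subgroup_zero[OF subgroup_D] by blast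
  then show ?thesis by simp
qed

lemma f_diff:
  assumes "x \<in> D" "y \<in> D" shows "f (x - y) = f x - f y"
proof -
  have "f ((x - y) + y) = f (x - y) + f y" using hom assms subgroup_diff[OF subgroup_D assms] by blast
  then show ?thesis by (simp add: algebra_simps)
qed

lemma f_eq_zero_iff: "x \<in> D \<Longrightarrow> f x = 0 \<longleftrightarrow> x = 0"
  using inj f_zero subgroup_zero[OF subgroup_D] unfolding inj_on_def by metis

lemma f_pos_iff:
  assumes x: "x \<in> D" shows "0 < f x \<longleftrightarrow> 0 < x"
proof -
  have "x < 0 \<Longrightarrow> f x < 0" "0 < x \<Longrightarrow> 0 < f x"
    using mono x subgroup_zero[OF subgroup_D] f_zero by metis+
  then show ?thesis using f_zero by (cases x "0::'u" rule: linorder_cases) auto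
qed

lemma hahn_D_supported: "a \<in> hahn D \<Longrightarrow> a \<in> supported_on D"
  by (rule hahn_supported_on) auto

lemma sext_at: "a \<in> supported_on D \<Longrightarrow> x \<in> D \<Longrightarrow> sext f a (f x) = a x"
proof -
  assume a: "a \<in> supported_on D" "x \<in> D"
  have S: "{g. a g \<noteq> 0 \<and> f g = f x} = (if a x \<noteq> 0 then {x} else {})"
    using a(2) inj supported_onD[OF a(1)] unfolding inj_on_def by auto
  show ?thesis unfolding sext_def S by simp
qed

lemma sext_out: "a \<in> supported_on D \<Longrightarrow> h \<notin> f ` D \<Longrightarrow> sext f a h = 0"
proof -
  assume a: "a \<in> supported_on D" "h \<notin> f ` D"
  then have none: "{g. a g \<noteq> 0 \<and> f g = h} = {}" using supported_onD[OF a(1)] by blast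
  show ?thesis unfolding sext_def none by simp
qed

lemma sext_eqI:
  assumes "a \<in> supported_on D" "\<And>x. x \<in> D \<Longrightarrow> P (f x) = a x" "\<And>h. h \<notin> f ` D \<Longrightarrow> P h = 0"
  shows "sext f a = P"
proof
  fix h
  show "sext f a h = P h"
  proof (cases "h \<in> f ` D")
    case True
    then obtain x where "x \<in> D" "h = f x" by blast
    then show ?thesis using sext_at[OF assms(1)] assms(2) by simp
  next
    case False
    then show ?thesis using sext_out[OF assms(1)] assms(3) by simp
  qed
qed

lemma sext_hadd:
  "a \<in> supported_on D \<Longrightarrow> b \<in> supported_on D \<Longrightarrow>
    sext f (hadd a b) = hadd (sext f a) (sext f (b :: 'u \<Rightarrow> 'k::comm_ring_1))"
  by (rule sext_eqI[OF supported_on_hadd]) (auto simp: sext_at sext_out hadd_def)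

lemma sext_hsub:
  "a \<in> supported_on D \<Longrightarrow> b \<in> supported_on D \<Longrightarrow>
    sext f (hsub a b) = hsub (sext f a) (sext f (b :: 'u \<Rightarrow> 'k::comm_ring_1))"
  by (rule sext_eqI[OF supported_on_hsub]) (auto simp: sext_at sext_out hsub_def)

lemma sext_hscale:
  "a \<in> supported_on D \<Longrightarrow> sext f (hscale c a) = hscale c (sext f (a :: 'u \<Rightarrow> 'k::comm_ring_1))"
  by (rule sext_eqI[OF supported_on_hscale]) (auto simp: sext_at sext_out hscale_def)

lemma sext_hconst: "sext f (hconst c) = hconst c"
proof (rule sext_eqI[OF supported_on_hconst[OF subgroup_D]])
  show "hconst c (f x) = hconst c x" if "x \<in> D" for x
    using f_eq_zero_iff[OF that] by (simp add: hconst_def)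
  show "hconst c h = 0" if "h \<notin> f ` D" for h
  proof -
    have "h \<noteq> 0" using that f_zero subgroup_zero[OF subgroup_D] by (metis image_eqI)
    then show ?thesis by (simp add: hconst_def)
  qed
qed

lemma sext_hmul_terms:
  assumes a: "a \<in> supported_on D" and b: "b \<in> supported_on D" and x: "x \<in> D"
  shows "{z. sext f a z \<noteq> 0 \<and> sext f b (f x - z) \<noteq> 0} = f ` {y. a y \<noteq> 0 \<and> b (x - y) \<noteq> 0}"
proof (intro set_eqI iffI)
  fix z assume "z \<in> {z. sext f a z \<noteq> 0 \<and> sext f b (f x - z) \<noteq> 0}"
  then have z: "sext f a z \<noteq> 0" "sext f b (f x - z) \<noteq> 0" by auto
  obtain y where y: "a y \<noteq> 0" "f y = z" using sext_supp[OF z(1)] by blast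
  then have yD: "y \<in> D" using supported_onD[OF a] by blast
  then have "f x - z = f (x - y)" using f_diff[OF x yD] y by simp
  then have "b (x - y) \<noteq> 0" using z sext_at[OF b subgroup_diff[OF subgroup_D x yD]] by simp
  then show "z \<in> f ` {y. a y \<noteq> 0 \<and> b (x - y) \<noteq> 0}" using y by blast
next
  fix z assume "z \<in> f ` {y. a y \<noteq> 0 \<and> b (x - y) \<noteq> 0}"
  then obtain y where y: "a y \<noteq> 0" "b (x - y) \<noteq> 0" "z = f y" by blast
  then have yD: "y \<in> D" using supported_onD[OF a] by blast
  have "f x - z = f (x - y)" using f_diff[OF x yD] y by simp
  then show "z \<in> {z. sext f a z \<noteq> 0 \<and> sext f b (f x - z) \<noteq> 0}"
    using y sext_at[OF a yD] sext_at[OF b subgroup_diff[OF subgroup_D x yD]] by simp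
qed

lemma sext_hmul:
  fixes a b :: "'u \<Rightarrow> 'k::comm_ring"
  assumes a: "a \<in> supported_on D" and b: "b \<in> supported_on D"
  shows "sext f (hmul a b) = hmul (sext f a) (sext f b)"
proof (rule sext_eqI[OF supported_on_hmul[OF subgroup_D a b]])
  fix x assume x: "x \<in> D"
  let ?A = "{y. a y \<noteq> 0 \<and> b (x - y) \<noteq> 0}"
  have AD: "?A \<subseteq> D" using supported_onD[OF a] by blast
  have "hmul (sext f a) (sext f b) (f x) = (\<Sum>z\<in>f ` ?A. sext f a z * sext f b (f x - z))"
    unfolding hmul_def sext_hmul_terms[OF a b x] ..
  also have "\<dots> = (\<Sum>y\<in>?A. sext f a (f y) * sext f b (f x - f y))"
    by (rule sum.reindex_cong[OF inj_on_subset[OF inj AD] refl]) simp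
  also have "\<dots> = (\<Sum>y\<in>?A. a y * b (x - y))"
  proof (rule sum.cong[OF refl])
    fix y assume "y \<in> ?A"
    then have yD: "y \<in> D" using AD by blast
    then show "sext f a (f y) * sext f b (f x - f y) = a y * b (x - y)"
      using sext_at[OF a yD] sext_at[OF b subgroup_diff[OF subgroup_D x yD]] f_diff[OF x yD] by simp
  qed
  finally show "hmul (sext f a) (sext f b) (f x) = hmul a b x" unfolding hmul_def .
next
  fix h assume h: "h \<notin> f ` D"
  have none: "{z. sext f a z \<noteq> 0 \<and> sext f b (h - z) \<noteq> 0} = {}"
  proof (rule ccontr)
    assume "\<not> ?thesis"
    then obtain z where z: "sext f a z \<noteq> 0" "sext f b (h - z) \<noteq> 0" by blast
    obtain y where y: "a y \<noteq> 0" "f y = z" using sext_supp[OF z(1)] by blast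
    obtain w where w: "b w \<noteq> 0" "f w = h - z" using sext_supp[OF z(2)] by blast
    have "y \<in> D" "w \<in> D" using y(1) w(1) supported_onD[OF a] supported_onD[OF b] by blast+
    then have "f (w + y) = h" "w + y \<in> D" using hom y w subgroup_add[OF subgroup_D] by auto
    then show False using h by blast
  qed
  show "hmul (sext f a) (sext f b) h = 0" unfolding hmul_def none by simp
qed

lemma sext_hpow:
  fixes a :: "'u \<Rightarrow> 'k::comm_ring_1"
  assumes "a \<in> supported_on D"
  shows "sext f (hpow a i) = hpow (sext f a) i"
  by (induct i)
    (simp_all add: sext_hconst hpow_Suc sext_hmul[OF assms supported_on_hpow[OF subgroup_D assms]])

lemma sext_hsum:
  assumes F: "\<And>i. i \<in> I \<Longrightarrow> F i \<in> supported_on D"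
  shows "sext f (hsum F I) = hsum (\<lambda>i. sext f (F i)) I"
proof (rule sext_eqI[OF supported_on_hsum[OF F]])
  fix x assume x: "x \<in> D"
  have S: "{i\<in>I. sext f (F i) (f x) \<noteq> 0} = {i\<in>I. F i x \<noteq> 0}" using sext_at[OF F x] by auto
  show "hsum (\<lambda>i. sext f (F i)) I (f x) = hsum F I x"
    unfolding hsum_def S by (rule sum.cong) (auto simp: sext_at[OF F x])
next
  fix h assume "h \<notin> f ` D"
  then have none: "{i\<in>I. sext f (F i) h \<noteq> 0} = {}" using sext_out[OF F] by auto
  show "hsum (\<lambda>i. sext f (F i)) I h = 0" unfolding hsum_def none by simp
qed

lemma sext_supp_eq:
  assumes a: "a \<in> supported_on D" shows "hsupp (sext f a) = f ` hsupp a"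
proof (intro set_eqI iffI)
  fix h assume "h \<in> hsupp (sext f a)"
  then show "h \<in> f ` hsupp a" using sext_supp[of f a h] by auto
next
  fix h assume "h \<in> f ` hsupp a"
  then obtain x where "a x \<noteq> 0" "h = f x" by auto
  then show "h \<in> hsupp (sext f a)" using sext_at[OF a] supported_onD[OF a] by auto
qed

lemma anti_wo_sext:
  assumes a: "a \<in> supported_on D" and aw: "anti_wo (hsupp a)"
  shows "anti_wo (hsupp (sext f a))"
proof -
  have "\<forall>x\<in>hsupp a. \<forall>y\<in>hsupp a. x < y \<longrightarrow> f x < f y" using mono supported_onD[OF a] by auto
  then show ?thesis unfolding sext_supp_eq[OF a] by (rule anti_wo_image[OF aw])
qed

lemma hval_sext:
  fixes a :: "'u \<Rightarrow> 'k::linordered_field"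
  assumes a: "a \<in> supported_on D" "anti_wo (hsupp a)" and nz: "a \<noteq> hzero"
  shows "hval (sext f a) = f (hval a)"
proof (rule hval_eq)
  have m: "hval a \<in> hsupp a" "\<forall>t\<in>hsupp a. t \<le> hval a" using hval_ex[OF a(2) nz] by auto
  have sD: "hsupp a \<subseteq> D" using a(1) unfolding supported_on_def by blast
  show "f (hval a) \<in> hsupp (sext f a)" using sext_supp_eq[OF a(1)] m(1) by blast
  show "\<forall>t\<in>hsupp (sext f a). t \<le> f (hval a)"
  proof
    fix t assume "t \<in> hsupp (sext f a)"
    then obtain x where x: "x \<in> hsupp a" "t = f x" using sext_supp_eq[OF a(1)] by blast
    then show "t \<le> f (hval a)" using m sD mono by (metis order_le_less subsetD)
  qed
qed

lemma hpos_sext: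
  fixes a :: "'u \<Rightarrow> 'k::linordered_field"
  assumes a: "a \<in> supported_on D" "anti_wo (hsupp a)" and p: "hpos a"
  shows "hpos (sext f a)"
proof -
  have nz: "a \<noteq> hzero" using p unfolding hpos_def by blast
  have "hval a \<in> D" using hval_ex(1)[OF a(2) nz] supported_onD[OF a(1)] by auto
  then have "0 < sext f a (f (hval a))" using sext_at[OF a(1)] p unfolding hpos_def by simp
  moreover from this have "sext f a \<noteq> hzero" by (auto simp: hzero_def)
  ultimately show ?thesis unfolding hpos_def hval_sext[OF a nz] by blast
qed

end

text \<open>If f is strictly increasing on the support of a, then the family a(g) f(g) is summable
  and its sum is sext f a; this is what "respecting arbitrary sums" amounts to.\<close>

lemma sext_as_sum:
  fixes a :: "'u::linorder \<Rightarrow> 'k::comm_ring_1" and f :: "'u \<Rightarrow> 'v::linorder"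
  assumes aw: "anti_wo (hsupp a)" and mono: "\<forall>x\<in>hsupp a. \<forall>y\<in>hsupp a. x < y \<longrightarrow> f x < f y"
  defines "F \<equiv> \<lambda>g. hscale (a g) (monom (f g) :: 'v \<Rightarrow> 'k)"
  shows "hsummable F (hsupp a)" "sext f a = hsum F (hsupp a)"
proof -
  have F: "F g h = (if f g = h then a g else 0)" for g h by (simp add: F_def hscale_def monom_def)
  have inj: "inj_on f (hsupp a)" using mono by (metis inj_onI less_irrefl neq_iff)
  have terms: "{g\<in>hsupp a. F g h \<noteq> 0} = f -` {h} \<inter> hsupp a" for h using F by auto
  have "(\<Union>g\<in>hsupp a. hsupp (F g)) \<subseteq> f ` hsupp a" using F by (auto split: if_splits)
  moreover have "anti_wo (f ` hsupp a)" by (rule anti_wo_image[OF aw mono])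
  ultimately have "anti_wo (\<Union>g\<in>hsupp a. hsupp (F g))" using anti_wo_subset by blast
  moreover have "finite {g\<in>hsupp a. F g h \<noteq> 0}" for h
    unfolding terms by (rule finite_vimage_IntI[OF _ inj]) simp
  ultimately show "hsummable F (hsupp a)" unfolding hsummable_def by blast
  show "sext f a = hsum F (hsupp a)"
  proof
    fix h
    have "{g. a g \<noteq> 0 \<and> f g = h} = f -` {h} \<inter> hsupp a" by auto
    then show "sext f a h = hsum F (hsupp a) h"
      unfolding sext_def hsum_def terms by (auto simp: F intro: sum.cong)
  qed
qed

section \<open>Transport commutes with the logarithm\<close>

context ghom
begin

lemma sext_eps_part:
  fixes a :: "'u \<Rightarrow> 'k::linordered_field"
  assumes a: "a \<in> hahn D" "hpos a"
  shows "eps_part (sext f a) = sext f (eps_part a)"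
proof -
  note dc = positive_decomp[OF subgroup_D a]
  have sa: "a \<in> supported_on D" using hahn_D_supported[OF a(1)] .
  have aw: "anti_wo (hsupp a)" using a(1) unfolding hahn_def by auto
  have nz: "a \<noteq> hzero" using a(2) unfolding hpos_def by blast
  let ?m = "hval a" let ?c = "a (hval a)"
  have hv: "hval (sext f a) = f ?m" using hval_sext[OF sa aw nz] .
  have cv: "sext f a (f ?m) = ?c" using sext_at[OF sa dc(1)] .
  have se: "eps_part a \<in> supported_on D" using dc(5) unfolding supported_on_def by simp
  show ?thesis
  proof (rule sym, rule sext_eqI[OF se])
    fix x assume x: "x \<in> D"
    have "f x + f ?m = f (x + ?m)" using hom x dc(1) by simp
    then have "sext f a (f x + f ?m) = a (x + ?m)"
      using sext_at[OF sa subgroup_add[OF subgroup_D x dc(1)]] by simp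
    moreover have "hconst 1 (f x) = (hconst 1 x :: 'k)" using f_eq_zero_iff[OF x] by (simp add: hconst_def)
    ultimately show "eps_part (sext f a) (f x) = eps_part a x"
      unfolding eps_part_def hsub_def hv cv by simp
  next
    fix h assume h: "h \<notin> f ` D"
    have "h + f ?m \<notin> f ` D"
    proof
      assume "h + f ?m \<in> f ` D"
      then obtain y where y: "y \<in> D" "h + f ?m = f y" by blast
      then have "h = f y - f ?m" by (simp add: eq_diff_eq)
      then have "h = f (y - ?m)" using f_diff[OF y(1) dc(1)] by simp
      then show False using h subgroup_diff[OF subgroup_D y(1) dc(1)] by blast
    qed
    then have "sext f a (h + f ?m) = 0" using sext_out[OF sa] by blast
    moreover have "h \<noteq> 0" using h f_zero subgroup_zero[OF subgroup_D] by (metis image_eqI)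
    ultimately show "eps_part (sext f a) h = 0" unfolding eps_part_def hsub_def hv cv hconst_def by simp
  qed
qed

lemma sext_log_series:
  fixes e :: "'u \<Rightarrow> 'k::linordered_field"
  assumes e: "e \<in> supported_on D"
  shows "sext f (log_series e) = log_series (sext f e)"
proof -
  have "hscale c (hpow e i) \<in> supported_on D" for c i
    using supported_on_hscale[OF supported_on_hpow[OF subgroup_D e]] .
  then show ?thesis unfolding log_series_def
    by (simp add: sext_hsum sext_hscale[OF supported_on_hpow[OF subgroup_D e]] sext_hpow[OF e])
qed

lemma sext_hLog:
  fixes a :: "'u \<Rightarrow> 'k::linordered_field" and lg :: "'k \<Rightarrow> 'k"
  assumes a: "a \<in> hahn D" "hpos a"
    and lam_D: "lam (hval a) \<in> supported_on D"
    and lam_f: "lam' (f (hval a)) = sext f (lam (hval a))"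
  shows "sext f (hLog lg lam a) = hLog lg lam' (sext f a)"
proof -
  note dc = positive_decomp[OF subgroup_D a]
  have sa: "a \<in> supported_on D" using hahn_D_supported[OF a(1)] .
  have aw: "anti_wo (hsupp a)" using a(1) unfolding hahn_def by auto
  have nz: "a \<noteq> hzero" using a(2) unfolding hpos_def by blast
  have se: "eps_part a \<in> supported_on D" using dc(5) unfolding supported_on_def by simp
  have sL: "log_series (eps_part a) \<in> supported_on D" unfolding log_series_def
    by (rule supported_on_hsum supported_on_hscale supported_on_hpow[OF subgroup_D se])+
  have "sext f (hLog lg lam a) =
      hadd (hadd (sext f (lam (hval a))) (hconst (lg (a (hval a))))) (sext f (log_series (eps_part a)))"
    unfolding hLog_eq
    by (simp add: sext_hadd supported_on_hadd lam_D supported_on_hconst[OF subgroup_D] sL sext_hconst)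
  also have "\<dots> = hLog lg lam' (sext f a)"
    unfolding hLog_eq hval_sext[OF sa aw nz] sext_at[OF sa dc(1)] sext_eps_part[OF a]
      sext_log_series[OF se] lam_f ..
  finally show ?thesis .
qed

end

section \<open>The induced embeddings psi^{#n} and psi^{EL}\<close>

locale morph = t1: tower G1 l1 H1 lam1 + t2: tower G2 l2 H2 lam2
  for G1 :: "'u::linordered_ab_group_add set" and l1 :: "'u \<Rightarrow> 'u \<Rightarrow> 'k::linordered_field"
    and H1 :: "nat \<Rightarrow> 'u set" and lam1 :: "'u \<Rightarrow> 'u \<Rightarrow> 'k"
    and G2 :: "'v::linordered_ab_group_add set" and l2 :: "'v \<Rightarrow> 'v \<Rightarrow> 'k"
    and H2 :: "nat \<Rightarrow> 'v set" and lam2 :: "'v \<Rightarrow> 'v \<Rightarrow> 'k" +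
  fixes psi :: "'u \<Rightarrow> 'v"
  assumes psi_into: "\<forall>g\<in>G1. psi g \<in> G2"
    and psi_hom: "\<forall>x\<in>G1. \<forall>y\<in>G1. psi (x + y) = psi x + psi y"
    and psi_mono: "\<forall>x\<in>G1. \<forall>y\<in>G1. x < y \<longrightarrow> psi x < psi y"
    and psi_morph: "\<forall>g\<in>G1. sext psi (l1 g) = l2 (psi g)"
begin

abbreviation psi_n :: "nat \<Rightarrow> 'u \<Rightarrow> 'v" where "psi_n \<equiv> psiN lam1 H2 lam2 psi"

lemma level_step:
  assumes gh: "ghom (H1 n) (psi_n n)" and into: "\<forall>g\<in>H1 n. psi_n n g \<in> H2 n"
    and g: "g \<in> H1 (Suc n)"
  shows "psi_n (Suc n) g \<in> H2 (Suc n)" "lam2 (psi_n (Suc n) g) = sext (psi_n n) (lam1 g)"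
proof -
  interpret gh: ghom "H1 n" "psi_n n" by (rule gh)
  let ?a = "lam1 g"
  have a: "?a \<in> hahn {x\<in>H1 n. 0 < x}" using t1.lam_in[OF g] .
  have sa: "?a \<in> supported_on (H1 n)" by (rule hahn_supported_on[OF a]) auto
  have "hsupp (sext (psi_n n) ?a) \<subseteq> {x\<in>H2 n. 0 < x}"
    using a into gh.f_pos_iff unfolding gh.sext_supp_eq[OF sa] hahn_def by auto
  moreover have "anti_wo (hsupp (sext (psi_n n) ?a))" using gh.anti_wo_sext[OF sa] a unfolding hahn_def by auto
  ultimately have "sext (psi_n n) ?a \<in> lam2 ` H2 (Suc n)"
    using t2.lam_bij unfolding bij_betw_def hahn_def by blast
  then show "psi_n (Suc n) g \<in> H2 (Suc n)" "lam2 (psi_n (Suc n) g) = sext (psi_n n) (lam1 g)"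
    by (simp_all add: inv_into_into f_inv_into_f)
qed

lemma level_ghom:
  assumes gh: "ghom (H1 n) (psi_n n)" and into: "\<forall>g\<in>H1 n. psi_n n g \<in> H2 n"
  shows "ghom (H1 (Suc n)) (psi_n (Suc n))"
proof -
  interpret gh: ghom "H1 n" "psi_n n" by (rule gh)
  note step = level_step[OF gh into]
  have sl: "lam1 x \<in> supported_on (H1 n)" if "x \<in> H1 (Suc n)" for x
    by (rule hahn_supported_on[OF t1.lam_in[OF that]]) auto
  have "psi_n (Suc n) (x + y) = psi_n (Suc n) x + psi_n (Suc n) y"
    if x: "x \<in> H1 (Suc n)" and y: "y \<in> H1 (Suc n)" for x y
  proof -
    have xy: "x + y \<in> H1 (Suc n)" using subgroup_add[OF t1.subgroup_H x y] .
    have "lam2 (psi_n (Suc n) (x + y)) = sext (psi_n n) (hadd (lam1 x) (lam1 y))"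
      using step(2)[OF xy] t1.lam_add[OF x y] by simp
    also have "\<dots> = hadd (lam2 (psi_n (Suc n) x)) (lam2 (psi_n (Suc n) y))"
      using gh.sext_hadd[OF sl[OF x] sl[OF y]] step(2) x y by simp
    also have "\<dots> = lam2 (psi_n (Suc n) x + psi_n (Suc n) y)"
      using t2.lam_add[OF step(1)[OF x] step(1)[OF y]] by simp
    finally show ?thesis
      using t2.lam_inj step(1)[OF xy] subgroup_add[OF t2.subgroup_H step(1)[OF x] step(1)[OF y]]
      unfolding inj_on_def by blast
  qed
  moreover have "psi_n (Suc n) x < psi_n (Suc n) y"
    if x: "x \<in> H1 (Suc n)" and y: "y \<in> H1 (Suc n)" and xy: "x < y" for x y
  proof -
    have "hpos (hsub (lam1 y) (lam1 x))" using t1.lam_mono[OF x y xy] unfolding hless_def .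
    moreover have "anti_wo (hsupp (hsub (lam1 y) (lam1 x)))"
      using t1.lam_in[OF x] t1.lam_in[OF y] anti_wo_hsub unfolding hahn_def by blast
    ultimately have "hpos (sext (psi_n n) (hsub (lam1 y) (lam1 x)))"
      using gh.hpos_sext[OF supported_on_hsub[OF sl[OF y] sl[OF x]]] by blast
    then have "hless (lam2 (psi_n (Suc n) x)) (lam2 (psi_n (Suc n) y))"
      unfolding hless_def using gh.sext_hsub[OF sl[OF y] sl[OF x]] step(2) x y by simp
    then show ?thesis using t2.lam_less_iff step(1) x y by blast
  qed
  ultimately show ?thesis unfolding ghom_def using t1.subgroup_H by blast
qed

lemma levels: "ghom (H1 n) (psi_n n) \<and> (\<forall>g\<in>H1 n. psi_n n g \<in> H2 n)"
proof (induct n)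
  case 0
  have "ghom G1 psi" unfolding ghom_def using t1.subgroup_G psi_hom psi_mono by blast
  then show ?case using psi_into t1.H0 t2.H0 by simp
next
  case (Suc n)
  then show ?case using level_ghom level_step(1) by blast
qed

lemma psi_n_Suc: "g \<in> H1 n \<Longrightarrow> psi_n (Suc n) g = psi_n n g"
proof (induct n arbitrary: g)
  case 0
  then have gG: "g \<in> G1" and pG: "psi g \<in> G2" using t1.H0 psi_into by auto
  have "sext psi (lam1 g) = lam2 (psi g)" using psi_morph gG pG t1.lam_l t2.lam_l by simp
  moreover have "psi g \<in> H2 (Suc 0)" using pG t2.H0 t2.H_Suc[of 0] by auto
  ultimately show ?case using t2.lam_inj by (simp add: inv_into_f_f)
next
  case (Suc n)
  note step = level_step[OF levels[THEN conjunct1] levels[THEN conjunct2] Suc.prems]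
  have "sext (psi_n (Suc n)) (lam1 g) = sext (psi_n n) (lam1 g)"
    by (rule sext_cong) (use t1.lam_in[OF Suc.prems] Suc.hyps in \<open>auto simp: hahn_def\<close>)
  then have "sext (psi_n (Suc n)) (lam1 g) = lam2 (psi_n (Suc n) g)" using step(2) by simp
  moreover have "psi_n (Suc n) g \<in> H2 (Suc (Suc n))" using step(1) t2.H_Suc by blast
  ultimately show ?case using t2.lam_inj by (simp add: inv_into_f_f)
qed

lemma psi_n_mono: "n \<le> m \<Longrightarrow> g \<in> H1 n \<Longrightarrow> psi_n m g = psi_n n g"
proof (induct m rule: dec_induct)
  case (step m)
  then show ?case using psi_n_Suc t1.H_mono by (metis subsetD)
qed simp

abbreviation phi :: "'u \<Rightarrow> 'v" where "phi \<equiv> psiEL H1 lam1 H2 lam2 psi"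

lemma phi_eq:
  assumes g: "g \<in> H1 n" shows "phi g = psi_n n g"
proof -
  let ?k = "LEAST k. g \<in> H1 k"
  have "g \<in> H1 ?k" "?k \<le> n" using g by (rule LeastI, rule Least_le)
  then show ?thesis unfolding psiEL_def using psi_n_mono g by simp
qed

definition G1EL :: "'u set" where "G1EL = (\<Union>n. H1 n)"

lemma H1_G1EL: "H1 n \<subseteq> G1EL"
  unfolding G1EL_def by blast

lemma G1EL_common:
  assumes "x \<in> G1EL" "y \<in> G1EL" obtains n where "x \<in> H1 n" "y \<in> H1 n"
proof -
  obtain n m where "x \<in> H1 n" "y \<in> H1 m" using assms unfolding G1EL_def by blast
  then show ?thesis using that t1.H_mono[of n "max n m"] t1.H_mono[of m "max n m"] by auto
qed

lemma ghom_phi: "ghom G1EL phi"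
  unfolding ghom_def
proof (intro conjI ballI impI)
  show "subgroup_of G1EL" unfolding subgroup_of_def
  proof (intro conjI ballI)
    show "0 \<in> G1EL" using H1_G1EL subgroup_zero[OF t1.subgroup_H[of 0]] by blast
  next
    fix x y assume "x \<in> G1EL" "y \<in> G1EL"
    then obtain n where "x \<in> H1 n" "y \<in> H1 n" by (rule G1EL_common)
    then show "x + y \<in> G1EL" using H1_G1EL subgroup_add[OF t1.subgroup_H] by blast
  next
    fix x assume "x \<in> G1EL"
    then obtain n where "x \<in> H1 n" unfolding G1EL_def by blast
    then have "- x \<in> H1 n" using t1.subgroup_H[of n] unfolding subgroup_of_def by blast
    then show "- x \<in> G1EL" using H1_G1EL by blast
  qed
next
  fix x y assume "x \<in> G1EL" "y \<in> G1EL"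
  then obtain n where n: "x \<in> H1 n" "y \<in> H1 n" by (rule G1EL_common)
  have gh: "ghom (H1 n) (psi_n n)" using levels by blast
  have "x + y \<in> H1 n" using subgroup_add[OF t1.subgroup_H n] .
  then show "phi (x + y) = phi x + phi y"
    using n phi_eq ghom.hom[OF gh] by simp
  show "x < y \<Longrightarrow> phi x < phi y" using n phi_eq ghom.mono[OF gh] by simp
qed

sublocale phi: ghom G1EL phi by (rule ghom_phi)

lemma phi_H: "g \<in> H1 n \<Longrightarrow> phi g \<in> H2 n"
  using phi_eq levels by simp

lemma lam_phi: "g \<in> G1EL \<Longrightarrow> lam2 (phi g) = sext phi (lam1 g)"
proof -
  assume "g \<in> G1EL"
  then obtain k where "g \<in> H1 k" unfolding G1EL_def by blast
  then have g: "g \<in> H1 (Suc k)" using t1.H_Suc by blast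
  have "lam2 (psi_n (Suc k) g) = sext (psi_n k) (lam1 g)"
    using level_step(2)[OF _ _ g] levels[of k] by simp
  also have "\<dots> = sext phi (lam1 g)"
    by (rule sext_cong) (use t1.lam_in[OF g] phi_eq in \<open>auto simp: hahn_def\<close>)
  finally show ?thesis using phi_eq[OF g] by simp
qed

lemma ELser_supported: "a \<in> ELser H1 \<Longrightarrow> a \<in> supported_on G1EL"
  unfolding ELser_def using hahn_supported_on H1_G1EL by blast

end

section \<open>Parts (1) and (2): psi^{EL} is an embedding commuting with Log and Exp\<close>

context morph
begin

abbreviation Psi :: "('u \<Rightarrow> 'k) \<Rightarrow> 'v \<Rightarrow> 'k" where "Psi \<equiv> sext phi"

lemma PsiEL_eq: "PsiEL H1 lam1 H2 lam2 psi = Psi"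
  unfolding PsiEL_def ..

lemma ELser_hahn_G1EL: "a \<in> ELser H1 \<Longrightarrow> a \<in> hahn G1EL"
  using hahn_mono[OF H1_G1EL] unfolding ELser_def by blast

lemma Psi_in:
  assumes "a \<in> ELser H1" shows "Psi a \<in> ELser H2"
proof -
  obtain n where a: "a \<in> hahn (H1 n)" using assms unfolding ELser_def by blast
  have sa: "a \<in> supported_on G1EL" using ELser_supported[OF assms] .
  have "hsupp (Psi a) \<subseteq> H2 n" using phi.sext_supp_eq[OF sa] a phi_H unfolding hahn_def by auto
  moreover have "anti_wo (hsupp (Psi a))" using phi.anti_wo_sext[OF sa] a unfolding hahn_def by auto
  ultimately show ?thesis unfolding ELser_def hahn_def by blast
qed

lemma Psi_inj: "inj_on Psi (ELser H1)"
proof (rule inj_onI)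
  fix a b :: "'u \<Rightarrow> 'k" assume a: "a \<in> ELser H1" and b: "b \<in> ELser H1" and eq: "Psi a = Psi b"
  note sa = ELser_supported[OF a] and sb = ELser_supported[OF b]
  show "a = b"
  proof
    fix x
    show "a x = b x"
    proof (cases "x \<in> G1EL")
      case True
      then show ?thesis using phi.sext_at[OF sa True] phi.sext_at[OF sb True] eq by metis
    next
      case False
      then show ?thesis using supported_onD[OF sa] supported_onD[OF sb] by metis
    qed
  qed
qed

lemma Psi_hless:
  assumes a: "a \<in> ELser H1" and b: "b \<in> ELser H1" and less: "hless a (b :: 'u \<Rightarrow> 'k)"
  shows "hless (Psi a) (Psi b)"
proof -
  note sa = ELser_supported[OF a] and sb = ELser_supported[OF b]
  have "anti_wo (hsupp (hsub b a))"
    using a b anti_wo_hsub unfolding ELser_def hahn_def by blast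
  then have "hpos (Psi (hsub b a))"
    using phi.hpos_sext[OF supported_on_hsub[OF sb sa]] less unfolding hless_def by blast
  then show ?thesis unfolding hless_def phi.sext_hsub[OF sb sa] .
qed

lemma Psi_respects_sums: "respects_sums (ELser H1) Psi"
  unfolding respects_sums_def
proof
  fix a :: "'u \<Rightarrow> 'k" assume a: "a \<in> ELser H1"
  have aw: "anti_wo (hsupp a)" using a unfolding ELser_def hahn_def by auto
  have "\<forall>x\<in>hsupp a. \<forall>y\<in>hsupp a. x < y \<longrightarrow> phi x < phi y"
    using phi.mono supported_onD[OF ELser_supported[OF a]] by auto
  from sext_as_sum[OF aw this] show "hsummable (\<lambda>g. hscale (a g) (Psi (monom g))) (hsupp a) \<and>
      Psi a = hsum (\<lambda>g. hscale (a g) (Psi (monom g))) (hsupp a)"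
    by (simp add: sext_monom)
qed

lemma embedding:
  "(\<forall>a\<in>ELser H1. Psi a \<in> ELser H2) \<and>
   inj_on Psi (ELser H1) \<and>
   (\<forall>a\<in>ELser H1. \<forall>b\<in>ELser H1. Psi (hadd a b) = hadd (Psi a) (Psi b)) \<and>
   (\<forall>a\<in>ELser H1. \<forall>b\<in>ELser H1. Psi (hmul a b) = hmul (Psi a) (Psi b)) \<and>
   (\<forall>c. Psi (hconst c) = hconst c) \<and>
   (\<forall>c. \<forall>a\<in>ELser H1. Psi (hscale c a) = hscale c (Psi a)) \<and>
   (\<forall>a\<in>ELser H1. \<forall>b\<in>ELser H1. hless a b \<longrightarrow> hless (Psi a) (Psi b)) \<and>
   respects_sums (ELser H1) Psi"
proof (intro conjI ballI allI impI)
  show "inj_on Psi (ELser H1)" "respects_sums (ELser H1) Psi"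
    by (rule Psi_inj, rule Psi_respects_sums)
  show "Psi (hconst c :: 'u \<Rightarrow> 'k) = hconst c" for c by (rule phi.sext_hconst)
  fix a b :: "'u \<Rightarrow> 'k" assume a: "a \<in> ELser H1"
  then show "Psi a \<in> ELser H2" by (rule Psi_in)
  show "Psi (hscale c a) = hscale c (Psi a)" for c by (rule phi.sext_hscale[OF ELser_supported[OF a]])
  assume b: "b \<in> ELser H1"
  note sa = ELser_supported[OF a] and sb = ELser_supported[OF b]
  show "Psi (hadd a b) = hadd (Psi a) (Psi b)" by (rule phi.sext_hadd[OF sa sb])
  show "Psi (hmul a b) = hmul (Psi a) (Psi b)" by (rule phi.sext_hmul[OF sa sb])
  show "hless a b \<Longrightarrow> hless (Psi a) (Psi b)" by (rule Psi_hless[OF a b])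
qed

lemma Psi_Log:
  fixes lg :: "'k \<Rightarrow> 'k" and a :: "'u \<Rightarrow> 'k"
  assumes a: "a \<in> ELser H1" "hpos a"
  shows "Psi (hLog lg lam1 a) = hLog lg lam2 (Psi a)"
proof (rule phi.sext_hLog[OF ELser_hahn_G1EL[OF a(1)] a(2)])
  obtain n where an: "a \<in> hahn (H1 n)" using a(1) unfolding ELser_def by blast
  have m: "hval a \<in> H1 (Suc n)" using positive_decomp(1)[OF t1.subgroup_H an a(2)] t1.H_Suc by blast
  show "lam1 (hval a) \<in> supported_on G1EL"
    by (rule hahn_supported_on[OF t1.lam_in[OF m]]) (use H1_G1EL in auto)
  show "lam2 (phi (hval a)) = Psi (lam1 (hval a))" using lam_phi m H1_G1EL by blast
qed

lemma Psi_Exp: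
  fixes lg :: "'k \<Rightarrow> 'k" and a :: "'u \<Rightarrow> 'k"
  assumes lg_bij: "bij_betw lg {x. 0 < x} UNIV" and a: "a \<in> ELser H1"
  shows "Psi (hExp lg H1 lam1 a) = hExp lg H2 lam2 (Psi a)"
proof -
  obtain x where x: "x \<in> ELser H1" "hpos x" "hLog lg lam1 x = a" using t1.Log_surj[OF lg_bij a] by blast
  have "hpos (Psi x)"
    using phi.hpos_sext[OF ELser_supported[OF x(1)] _ x(2)] x(1) unfolding ELser_def hahn_def by blast
  moreover have "hLog lg lam2 (Psi x) = Psi a" using Psi_Log[OF x(1,2), where lg = lg] x(3) by simp
  ultimately have "hExp lg H2 lam2 (Psi a) = Psi x" using t2.hExp_eq[OF lg_bij Psi_in[OF x(1)]] by blast
  moreover have "hExp lg H1 lam1 a = x" using t1.hExp_eq[OF lg_bij x] .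
  ultimately show ?thesis by simp
qed

end

section \<open>Part (3): surjectivity\<close>

lemma hsummable_cong:
  assumes "\<And>i. i \<in> I \<Longrightarrow> F i = F' i" shows "hsummable F I \<longleftrightarrow> hsummable F' I"
proof -
  have "(\<Union>i\<in>I. hsupp (F i)) = (\<Union>i\<in>I. hsupp (F' i))" "{i\<in>I. F i g \<noteq> 0} = {i\<in>I. F' i g \<noteq> 0}" for g
    using assms by auto
  then show ?thesis unfolding hsummable_def by simp
qed

lemma hsum_cong: "(\<And>i. i \<in> I \<Longrightarrow> F i = F' i) \<Longrightarrow> hsum F I = hsum F' I"
  unfolding hsum_def by (intro ext sum.cong) auto

lemma monom_hahn: "g \<in> S \<Longrightarrow> (monom g :: 'u::linorder \<Rightarrow> 'k::zero_neq_one) \<in> hahn S"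
proof -
  assume "g \<in> S"
  moreover have "hsupp (monom g :: 'u \<Rightarrow> 'k) = {g}" by (auto simp: monom_def split: if_splits)
  moreover have "anti_wo {g}" unfolding anti_wo_def by blast
  ultimately show ?thesis unfolding hahn_def by simp
qed

context morph
begin

abbreviation rho :: "'v \<Rightarrow> 'u" where "rho \<equiv> inv_into G1EL phi"

lemma rho_phi: "x \<in> G1EL \<Longrightarrow> rho (phi x) = x"
  using phi.inj by (rule inv_into_f_f)

lemma phi_rho: "g \<in> phi ` G1EL \<Longrightarrow> rho g \<in> G1EL \<and> phi (rho g) = g"
  by (simp add: inv_into_into f_inv_into_f)

lemma rho_mono:
  assumes "x \<in> phi ` G1EL" "y \<in> phi ` G1EL" "x < y" shows "rho x < rho y"
proof (rule ccontr)
  assume "\<not> rho x < rho y"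
  then consider "rho y = rho x" | "rho y < rho x" by fastforce
  then have "y \<le> x"
  proof cases
    case 1
    then show ?thesis using phi_rho[OF assms(1)] phi_rho[OF assms(2)] by simp
  next
    case 2
    then have "phi (rho y) < phi (rho x)" using phi_rho[OF assms(1)] phi_rho[OF assms(2)] phi.mono by blast
    then show ?thesis using phi_rho[OF assms(1)] phi_rho[OF assms(2)] by simp
  qed
  then show False using assms(3) by simp
qed

lemma inverse_transport:
  assumes sub: "H2 m \<subseteq> phi ` H1 k" and b: "b \<in> hahn (H2 m)"
  shows "sext rho b \<in> hahn (H1 k)" "hsupp (sext rho b) = rho ` hsupp b" "Psi (sext rho b) = b"
    "\<forall>x\<in>hsupp b. \<forall>y\<in>hsupp b. x < y \<longrightarrow> rho x < rho y"
proof -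
  have bw: "anti_wo (hsupp b)" and bH: "hsupp b \<subseteq> phi ` H1 k" using b sub unfolding hahn_def by auto
  then have img: "hsupp b \<subseteq> phi ` G1EL" using H1_G1EL by blast
  show mono: "\<forall>x\<in>hsupp b. \<forall>y\<in>hsupp b. x < y \<longrightarrow> rho x < rho y"
  proof (intro ballI impI)
    fix x y assume "x \<in> hsupp b" "y \<in> hsupp b" "x < y"
    then show "rho x < rho y" using img by (intro rho_mono) auto
  qed
  have inj: "inj_on rho (hsupp b)"
  proof (rule inj_onI)
    fix x y assume "x \<in> hsupp b" "y \<in> hsupp b" "rho x = rho y"
    then show "x = y" using img phi_rho by (metis subsetD)
  qed
  show supp: "hsupp (sext rho b) = rho ` hsupp b" by (rule sext_supp_inj[OF inj])
  have "rho ` hsupp b \<subseteq> H1 k"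
  proof
    fix x assume "x \<in> rho ` hsupp b"
    then obtain x' where x': "x' \<in> H1 k" "x = rho (phi x')" using bH by blast
    then have "x' \<in> G1EL" using H1_G1EL by blast
    then show "x \<in> H1 k" using x' rho_phi by simp
  qed
  moreover have "anti_wo (rho ` hsupp b)" by (rule anti_wo_image[OF bw mono])
  ultimately show hahn: "sext rho b \<in> hahn (H1 k)" unfolding hahn_def mem_Collect_eq supp ..
  have sG: "sext rho b \<in> supported_on G1EL" by (rule hahn_supported_on[OF hahn H1_G1EL])
  show "Psi (sext rho b) = b"
  proof (rule phi.sext_eqI[OF sG])
    fix x assume x: "x \<in> G1EL"
    show "b (phi x) = sext rho b x"
    proof (cases "b (phi x) = 0")
      case True
      have "x \<notin> hsupp (sext rho b)"
      proof
        assume "x \<in> hsupp (sext rho b)"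
        then obtain g where g: "b g \<noteq> 0" "x = rho g" using supp by auto
        then have "phi x = g" using phi_rho img by auto
        then show False using True g(1) by simp
      qed
      then show ?thesis using True by simp
    next
      case False
      then show ?thesis using sext_at_inj[OF inj False] rho_phi[OF x] by simp
    qed
  next
    fix h assume "h \<notin> phi ` G1EL"
    then show "b h = 0" using img by auto
  qed
qed

text \<open>If G2 lies in the image of H1 n, then by induction H2 m lies in the image of H1 (n + m):
  the section l2 of an element of H2 (m + 1) has a preimage under psi^{EL} that is a value
  of l1.\<close>

lemma H2_image:
  assumes n: "G2 \<subseteq> phi ` H1 n"
  shows "H2 m \<subseteq> phi ` H1 (n + m)"
proof (induct m)
  case 0
  then show ?case using n t2.H0 by simp
next
  case (Suc m)
  show ?case
  proof
    fix g' assume g': "g' \<in> H2 (Suc m)"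
    let ?b = "lam2 g'" let ?k = "n + m"
    have bpos: "?b \<in> hahn {x\<in>H2 m. 0 < x}" using t2.lam_in[OF g'] .
    then have "?b \<in> hahn (H2 m)" by (rule subsetD[OF hahn_mono, rotated]) auto
    note inv = inverse_transport[OF Suc this]
    have pos: "hsupp (sext rho ?b) \<subseteq> {x\<in>H1 ?k. 0 < x}"
    proof
      fix x assume "x \<in> hsupp (sext rho ?b)"
      then obtain y where y: "y \<in> hsupp ?b" "x = rho y" using inv(2) by blast
      have "y \<in> H2 m" "0 < y" using y(1) bpos unfolding hahn_def by auto
      then obtain x' where x': "x' \<in> H1 ?k" "y = phi x'" "0 < phi x'" using Suc by blast
      have x'G: "x' \<in> G1EL" using x'(1) H1_G1EL by blast
      then have "x = x'" using y(2) x'(2) rho_phi by simp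
      then show "x \<in> {x\<in>H1 ?k. 0 < x}" using x' phi.f_pos_iff[OF x'G] by simp
    qed
    have "sext rho ?b \<in> hahn {x\<in>H1 ?k. 0 < x}" using inv(1) pos unfolding hahn_def by simp
    then have "sext rho ?b \<in> lam1 ` H1 (Suc ?k)" using t1.lam_bij[of ?k] unfolding bij_betw_def by simp
    then obtain g where g: "g \<in> H1 (Suc ?k)" "lam1 g = sext rho ?b" by (elim imageE) simp
    have "lam2 (phi g) = lam2 g'" using lam_phi[OF subsetD[OF H1_G1EL g(1)]] g(2) inv(3) by simp
    moreover have "phi g \<in> H2 (Suc ?k)" "g' \<in> H2 (Suc ?k)"
      using phi_H[OF g(1)] g' t2.H_mono[of "Suc m" "Suc ?k"] by auto
    ultimately have "phi g = g'" using t2.lam_inj unfolding inj_on_def by blast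
    then show "g' \<in> phi ` H1 (n + Suc m)" using g(1) by auto
  qed
qed

lemma part3_levels:
  assumes n: "G2 \<subseteq> phi ` H1 n"
  shows "hahn (H2 m) \<subseteq> Psi ` hahn (H1 (n + m))"
proof
  fix b :: "'v \<Rightarrow> 'k" assume b: "b \<in> hahn (H2 m)"
  show "b \<in> Psi ` hahn (H1 (n + m))"
    by (rule rev_image_eqI[OF inverse_transport(1)[OF H2_image[OF n] b]])
      (rule inverse_transport(3)[OF H2_image[OF n] b, symmetric])
qed

lemma part3_surj:
  assumes n: "G2 \<subseteq> phi ` H1 n"
  shows "Psi ` ELser H1 = ELser H2"
proof
  show "Psi ` ELser H1 \<subseteq> ELser H2" using Psi_in by auto
  show "ELser H2 \<subseteq> Psi ` ELser H1"
  proof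
    fix b :: "'v \<Rightarrow> 'k" assume "b \<in> ELser H2"
    then obtain m where "b \<in> hahn (H2 m)" unfolding ELser_def by blast
    then obtain a where "a \<in> hahn (H1 (n + m))" "b = Psi a" using part3_levels[OF n] by blast
    then show "b \<in> Psi ` ELser H1" unfolding ELser_def by blast
  qed
qed

text \<open>The inverse of psi^{EL} is transport along rho, hence it respects arbitrary sums.\<close>

lemma part3_inverse_respects_sums:
  assumes n: "G2 \<subseteq> phi ` H1 n"
  shows "respects_sums (ELser H2) (inv_into (ELser H1) Psi)"
  unfolding respects_sums_def
proof
  fix b :: "'v \<Rightarrow> 'k" assume "b \<in> ELser H2"
  then obtain m where b: "b \<in> hahn (H2 m)" unfolding ELser_def by blast
  then have bw: "anti_wo (hsupp b)" and bH: "hsupp b \<subseteq> H2 m" unfolding hahn_def by auto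
  note sub = H2_image[OF n, of m]
  have inv: "inv_into (ELser H1) Psi c = sext rho c" if c: "c \<in> hahn (H2 m)" for c
  proof (rule inv_into_f_eq[OF Psi_inj])
    have "sext rho c \<in> hahn (H1 (n + m))" using inverse_transport(1)[OF sub c] .
    then show "sext rho c \<in> ELser H1" unfolding ELser_def by blast
    show "Psi (sext rho c) = c" using inverse_transport(3)[OF sub c] .
  qed
  have terms: "hscale (b g) (inv_into (ELser H1) Psi (monom g)) = hscale (b g) (monom (rho g))"
    if "g \<in> hsupp b" for g
  proof -
    have "g \<in> H2 m" using that bH by blast
    then have "inv_into (ELser H1) Psi (monom g) = sext rho (monom g)" by (rule inv[OF monom_hahn])
    then show ?thesis by (simp add: sext_monom)
  qed
  let ?F = "\<lambda>g. hscale (b g) (inv_into (ELser H1) Psi (monom g))"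
  have "hsummable ?F (hsupp b) \<longleftrightarrow> hsummable (\<lambda>g. hscale (b g) (monom (rho g))) (hsupp b)"
    "hsum ?F (hsupp b) = hsum (\<lambda>g. hscale (b g) (monom (rho g))) (hsupp b)"
    by (rule hsummable_cong, rule terms, assumption) (rule hsum_cong, rule terms)
  then show "hsummable ?F (hsupp b) \<and> inv_into (ELser H1) Psi b = hsum ?F (hsupp b)"
    using sext_as_sum[OF bw inverse_transport(4)[OF sub b]] inv[OF b] by simp
qed

lemma log_exp:
  fixes lg :: "'k \<Rightarrow> 'k"
  assumes "bij_betw lg {x. 0 < x} UNIV"
  shows "(\<forall>a\<in>ELser H1. hpos a \<longrightarrow> Psi (hLog lg lam1 a) = hLog lg lam2 (Psi a)) \<and>
    (\<forall>a\<in>ELser H1. Psi (hExp lg H1 lam1 a) = hExp lg H2 lam2 (Psi a))"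
  using Psi_Log Psi_Exp[OF assms] by blast

lemma surjectivity:
  "\<forall>n. G2 \<subseteq> phi ` H1 n \<longrightarrow>
     (\<forall>m. hahn (H2 m) \<subseteq> Psi ` hahn (H1 (n + m))) \<and>
     Psi ` ELser H1 = ELser H2 \<and>
     respects_sums (ELser H2) (inv_into (ELser H1) Psi)"
  using part3_levels part3_surj part3_inverse_respects_sums by blast

end

theorem proposition7:
  fixes log :: "'k::linordered_field \<Rightarrow> 'k"
    and G1 :: "'u::linordered_ab_group_add set" and l1 :: "'u \<Rightarrow> 'u \<Rightarrow> 'k"
    and G2 :: "'v::linordered_ab_group_add set" and l2 :: "'v \<Rightarrow> 'v \<Rightarrow> 'k"
    and H1 :: "nat \<Rightarrow> 'u set" and lam1 :: "'u \<Rightarrow> 'u \<Rightarrow> 'k"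
    and H2 :: "nat \<Rightarrow> 'v set" and lam2 :: "'v \<Rightarrow> 'v \<Rightarrow> 'k"
    and psi :: "'u \<Rightarrow> 'v"
  assumes log_bij: "bij_betw log {x. 0 < x} UNIV"
    and log_mult: "\<forall>x>0. \<forall>y>0. log (x * y) = log x + log y"
    and log_mono: "\<forall>x>0. \<forall>y>0. x < y \<longrightarrow> log x < log y"
    and pl1: "prelog_section G1 l1"
    and pl2: "prelog_section G2 l2"
    and T1: "EL_tower G1 l1 H1 lam1"
    and T2: "EL_tower G2 l2 H2 lam2"
    and psi_into: "\<forall>g\<in>G1. psi g \<in> G2"
    and psi_hom: "\<forall>x\<in>G1. \<forall>y\<in>G1. psi (x + y) = psi x + psi y"
    and psi_mono: "\<forall>x\<in>G1. \<forall>y\<in>G1. x < y \<longrightarrow> psi x < psi y"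
    and psi_morph: "\<forall>g\<in>G1. sext psi (l1 g) = l2 (psi g)"
  shows
   "(let Psi = PsiEL H1 lam1 H2 lam2 psi in
     \<comment> \<open>(1)\<close>
     ((\<forall>a\<in>ELser H1. Psi a \<in> ELser H2) \<and>
      inj_on Psi (ELser H1) \<and>
      (\<forall>a\<in>ELser H1. \<forall>b\<in>ELser H1. Psi (hadd a b) = hadd (Psi a) (Psi b)) \<and>
      (\<forall>a\<in>ELser H1. \<forall>b\<in>ELser H1. Psi (hmul a b) = hmul (Psi a) (Psi b)) \<and>
      (\<forall>c. Psi (hconst c) = hconst c) \<and>
      (\<forall>c. \<forall>a\<in>ELser H1. Psi (hscale c a) = hscale c (Psi a)) \<and>
      (\<forall>a\<in>ELser H1. \<forall>b\<in>ELser H1. hless a b \<longrightarrow> hless (Psi a) (Psi b)) \<and>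
      respects_sums (ELser H1) Psi) \<and>
     \<comment> \<open>(2)\<close>
     ((\<forall>a\<in>ELser H1. hpos a \<longrightarrow> Psi (hLog log lam1 a) = hLog log lam2 (Psi a)) \<and>
      (\<forall>a\<in>ELser H1. Psi (hExp log H1 lam1 a) = hExp log H2 lam2 (Psi a))) \<and>
     \<comment> \<open>(3)\<close>
     (\<forall>n. G2 \<subseteq> psiEL H1 lam1 H2 lam2 psi ` H1 n \<longrightarrow>
        (\<forall>m. hahn (H2 m) \<subseteq> Psi ` hahn (H1 (n + m))) \<and>
        Psi ` ELser H1 = ELser H2 \<and>
        respects_sums (ELser H2) (inv_into (ELser H1) Psi)))"
proof -
  have "subgroup_of G1" "subgroup_of G2" using pl1 pl2 unfolding prelog_section_def by blast+
  then interpret M: morph G1 l1 H1 lam1 G2 l2 H2 lam2 psi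
    by (intro morph.intro tower.intro morph_axioms.intro T1 T2 psi_into psi_hom psi_mono psi_morph)
  show ?thesis
    unfolding Let_def M.PsiEL_eq
    using M.embedding M.log_exp[OF log_bij] M.surjectivity by (rule conjI[OF _ conjI])
qed

end
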